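(* Let $n,J\ge 1$ and let $X=[x_1^{*},\dots,x_J^{*}]^{*}\in\mathbb{C}^{Jn}$ with $x_j\in\mathbb{C}^n$. Then $$\|X\|_{\mathcal{CA}}=\inf\Big\{\tfrac{1}{2n}\Big(\operatorname{tr}\operatorname{Toep}(u_c)+\sum_{j=1}^{J}\operatorname{tr}\operatorname{Toep}(u_j)\Big)+\tfrac12 t\Big\},$$ where the infimum is over all $u_c,u_1,\dots,u_J\in\mathbb{C}^n$, $t\in\mathbb{R}$, and $z_c,z_1,\dots,z_J\in\mathbb{C}^n$ with $z_c+z_j=x_j$ for all $j\in\{1,\dots,J\}$, subject to the linear matrix inequality $$\begin{bmatrix}\operatorname{diag}\big(\operatorname{Toep}(u_c),\operatorname{Toep}(u_1),\dots,\operatorname{Toep}(u_J)\big) & Z\\ Z^{*} & t\end{bmatrix}\succeq 0,\qquad Z=[z_c^{*},z_1^{*},\dots,z_J^{*}]^{*}\in\mathbb{C}^{(J+1)n}.$$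
   Context: For $f\in[0,1]$ and $\phi\in[0,2\pi)$, the atom $a(f,\phi)\in\mathbb{C}^n$ has entries $[a(f,\phi)]_t=e^{i(2\pi f t+\phi)}$, $t=0,\dots,n-1$, and $a(f)=a(f,0)$. The atomic norm of $x\in\mathbb{C}^n$ is $\|x\|_{\mathcal{A}}=\inf\{\sum_k|c_k| : x=\sum_k |c_k|\,a(f_k,\phi_k),\ f_k\in[0,1],\ \phi_k\in[0,2\pi)\}$ (finite sums). The concatenated atomic norm (CA-norm) of $X=[x_1^*,\dots,x_J^*]^*$ is $\|X\|_{\mathcal{CA}}=\inf\{\|z_c\|_{\mathcal{A}}+\sum_{j=1}^J\|z_j\|_{\mathcal{A}} : z_c,z_j\in\mathbb{C}^n,\ z_c+z_j=x_j\ \forall j\}$. For $u\in\mathbb{C}^n$, $\operatorname{Toep}(u)$ denotes the $n\times n$ Hermitian Toeplitz matrix whose first column is $u$. $\operatorname{diag}(\cdot)$ denotes the block-diagonal matrix, $^{*}$ the conjugate transpose, and $\succeq 0$ positive semidefiniteness. *)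

theory Defs
  imports Complex_Main
begin

(* Vectors in C^n are functions nat => complex, only indices t < n matter.
   n x n matrices are functions nat => nat => complex, only indices < n matter. *)

definition atom :: "real \<Rightarrow> real \<Rightarrow> nat \<Rightarrow> complex" where
  "atom f \<phi> = (\<lambda>t. exp (\<i> * complex_of_real (2 * pi * f * real t + \<phi>)))"

definition atomic_norm :: "nat \<Rightarrow> (nat \<Rightarrow> complex) \<Rightarrow> real" where
  "atomic_norm n x = Inf {(\<Sum>k<m. cmod (c k)) | (m::nat) (c::nat \<Rightarrow> complex) (f::nat \<Rightarrow> real) (\<phi>::nat \<Rightarrow> real).
      (\<forall>k<m. f k \<in> {0..1} \<and> \<phi> k \<in> {0..<2*pi}) \<and>
      (\<forall>t<n. x t = (\<Sum>k<m. complex_of_real (cmod (c k)) * atom (f k) (\<phi> k) t))}"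

(* concatenated atomic norm; x j is the j-th block, j = 1..J *)
definition ca_norm :: "nat \<Rightarrow> nat \<Rightarrow> (nat \<Rightarrow> nat \<Rightarrow> complex) \<Rightarrow> real" where
  "ca_norm n J x = Inf {atomic_norm n zc + (\<Sum>j=1..J. atomic_norm n (z j)) | zc z.
      \<forall>j\<in>{1..J}. \<forall>t<n. zc t + z j t = x j t}"

definition toep :: "(nat \<Rightarrow> complex) \<Rightarrow> nat \<Rightarrow> nat \<Rightarrow> complex" where
  "toep u i k = (if k \<le> i then u (i - k) else cnj (u (k - i)))"

definition mtrace :: "nat \<Rightarrow> (nat \<Rightarrow> nat \<Rightarrow> complex) \<Rightarrow> complex" where
  "mtrace n M = (\<Sum>i<n. M i i)"

definition psd :: "nat \<Rightarrow> (nat \<Rightarrow> nat \<Rightarrow> complex) \<Rightarrow> bool" where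
  "psd N M = (\<forall>v :: nat \<Rightarrow> complex.
      (\<Sum>i<N. \<Sum>k<N. cnj (v i) * M i k * v k) \<in> \<real> \<and>
      0 \<le> Re (\<Sum>i<N. \<Sum>k<N. cnj (v i) * M i k * v k))"

(* The ((J+1)n+1) x ((J+1)n+1) matrix
   [ diag(Toep(u 0), ..., Toep(u J))   Z ]
   [ Z^*                               t ]
   with Z = [z 0; z 1; ...; z J]; block b occupies indices b*n .. b*n+n-1. *)
definition lmi_matrix :: "nat \<Rightarrow> nat \<Rightarrow> (nat \<Rightarrow> nat \<Rightarrow> complex) \<Rightarrow> real
    \<Rightarrow> (nat \<Rightarrow> nat \<Rightarrow> complex) \<Rightarrow> nat \<Rightarrow> nat \<Rightarrow> complex" where
  "lmi_matrix n J u t z i k =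
     (let N = (J + 1) * n in
      if i < N \<and> k < N then
        (if i div n = k div n then toep (u (i div n)) (i mod n) (k mod n) else 0)
      else if i < N \<and> k = N then z (i div n) (i mod n)
      else if i = N \<and> k < N then cnj (z (k div n) (k mod n))
      else if i = N \<and> k = N then complex_of_real t
      else 0)"

end

theory Submission
  imports Defs "Jordan_Normal_Form.Determinant"
begin

text \<open>
  At a feasible point of the semidefinite program every diagonal block \<open>Toep(u\<^sub>b)\<close> is positive
  semidefinite. An approximate Carath\'eodory--Fej\'er argument (extend \<open>Toep(u\<^sub>b)\<close> to a large
  positive semidefinite Toeplitz matrix and average its quadratic form over a fine Fourier grid)
  dominates \<open>Toep(u\<^sub>b)\<close> by a positive combination of grid atoms of total weight at most
  \<open>u\<^sub>b(0) + \<epsilon>\<close>. Writing \<open>z\<^sub>b = (\<Sum>\<^sub>k E\<^sub>k a\<^sub>k a\<^sub>k\<^sup>*) w\<^sub>b\<close> and using AM--GM gives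
  \<open>\<parallel>z\<^sub>b\<parallel>\<^sub>\<A> \<le> (u\<^sub>b(0) + \<epsilon>)/2 + S\<^sub>b/2\<close> with \<open>S\<^sub>b = w\<^sub>b\<^sup>* z\<^sub>b\<close>, and testing the LMI against
  \<open>[-w\<^sub>0; \<dots>; -w\<^sub>J; 1]\<close> shows \<open>\<Sum>\<^sub>b S\<^sub>b \<le> t\<close>; so the CA-norm is at most the SDP value.
  Conversely, nearly optimal atomic decompositions of \<open>z\<^sub>c, z\<^sub>1, \<dots>, z\<^sub>J\<close> yield Toeplitz matrices
  \<open>\<Sum>\<^sub>k \<rho>\<^sub>k a(f\<^sub>k) a(f\<^sub>k)\<^sup>*\<close> and \<open>t = \<Sum>\<^sub>k \<rho>\<^sub>k\<close> for which the LMI matrix is a sum of rank-one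
  positive semidefinite terms and the objective equals the total atomic cost.
\<close>

subsection \<open>Quadratic forms\<close>

definition qform :: "nat \<Rightarrow> (nat \<Rightarrow> nat \<Rightarrow> complex) \<Rightarrow> (nat \<Rightarrow> complex) \<Rightarrow> complex" where
  "qform m M v = (\<Sum>i<m. \<Sum>k<m. cnj (v i) * M i k * v k)"

text \<open>Weaker than \<open>psd\<close> (the form need not be real); the two agree on Hermitian matrices.\<close>
definition re_psd :: "nat \<Rightarrow> (nat \<Rightarrow> nat \<Rightarrow> complex) \<Rightarrow> bool" where
  "re_psd n M = (\<forall>v. 0 \<le> Re (qform n M v))"

lemma psd_iff_qform: "psd N M = (\<forall>v. qform N M v \<in> \<real> \<and> 0 \<le> Re (qform N M v))"
  unfolding psd_def qform_def ..

lemma qform_cong: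
  "(\<And>i k. i < m \<Longrightarrow> k < m \<Longrightarrow> M i k = M' i k) \<Longrightarrow> (\<And>i. i < m \<Longrightarrow> v i = v' i)
    \<Longrightarrow> qform m M v = qform m M' v'"
  unfolding qform_def by (auto intro!: sum.cong)

lemma qform_zero_vec: "qform n M (\<lambda>_. 0) = 0"
  unfolding qform_def by simp

lemma qform_eq_sum_mult_sum: "qform m M v = (\<Sum>i<m. cnj (v i) * (\<Sum>k<m. M i k * v k))"
  unfolding qform_def by (simp add: sum_distrib_left mult.assoc)

lemma qform_Suc_first:
  "qform (Suc m) M v = cnj (v 0) * M 0 0 * v 0 + (\<Sum>k<m. cnj (v 0) * M 0 (Suc k) * v (Suc k))
     + (\<Sum>i<m. cnj (v (Suc i)) * M (Suc i) 0 * v 0) + qform m (\<lambda>i k. M (Suc i) (Suc k)) (\<lambda>i. v (Suc i))"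
  unfolding qform_def by (simp only: sum.lessThan_Suc_shift) (simp add: sum.distrib algebra_simps)

lemma qform_Suc_last:
  "qform (Suc m) M v = qform m M v + (\<Sum>k<m. cnj (v m) * M m k * v k)
     + (\<Sum>i<m. cnj (v i) * M i m * v m) + cnj (v m) * M m m * v m"
  unfolding qform_def by (simp add: sum.distrib algebra_simps)

lemma qform_Suc_Suc_border:
  "qform (Suc (Suc m)) M v =
      cnj (v 0) * M 0 0 * v 0 + cnj (v 0) * (\<Sum>k<m. M 0 (Suc k) * v (Suc k))
    + cnj (v 0) * M 0 (Suc m) * v (Suc m) + (\<Sum>i<m. cnj (v (Suc i)) * M (Suc i) 0) * v 0
    + qform m (\<lambda>i k. M (Suc i) (Suc k)) (\<lambda>i. v (Suc i))
    + (\<Sum>i<m. cnj (v (Suc i)) * M (Suc i) (Suc m)) * v (Suc m)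
    + cnj (v (Suc m)) * M (Suc m) 0 * v 0 + cnj (v (Suc m)) * (\<Sum>k<m. M (Suc m) (Suc k) * v (Suc k))
    + cnj (v (Suc m)) * M (Suc m) (Suc m) * v (Suc m)"
  by (subst qform_Suc_first, subst qform_Suc_last) (simp add: sum_distrib_left sum_distrib_right mult.assoc)

lemma qform_unit0: "n \<ge> 1 \<Longrightarrow> qform n T (\<lambda>i. if i = 0 then 1 else 0) = T 0 0"
  unfolding qform_def
  by (simp add: if_distrib[where f="\<lambda>x. x * _"] if_distrib[where f="\<lambda>x. _ * x"] if_distrib[where f=cnj]
      cong del: if_weak_cong)

lemma qform_zero_extend: "n \<le> M \<Longrightarrow> qform M T (\<lambda>i. if i < n then w i else 0) = qform n T w"
proof -
  assume nM: "n \<le> M"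
  have "qform M T (\<lambda>i. if i < n then w i else 0)
      = (\<Sum>i<M. \<Sum>k<M. if i < n \<and> k < n then cnj (w i) * T i k * w k else 0)"
    unfolding qform_def by (intro sum.cong refl) auto
  also have "\<dots> = (\<Sum>i<M. if i < n then (\<Sum>k<n. cnj (w i) * T i k * w k) else 0)"
  proof (intro sum.cong refl)
    fix i
    have "(\<Sum>k<M. if i < n \<and> k < n then cnj (w i) * T i k * w k else 0)
        = (\<Sum>k\<in>{k\<in>{..<M}. k < n}. if i < n then cnj (w i) * T i k * w k else 0)"
      by (subst sum.inter_filter) (auto intro!: sum.cong)
    also have "{k\<in>{..<M}. k < n} = {..<n}" using nM by auto
    finally show "(\<Sum>k<M. if i < n \<and> k < n then cnj (w i) * T i k * w k else 0)
        = (if i < n then (\<Sum>k<n. cnj (w i) * T i k * w k) else 0)" by auto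
  qed
  also have "\<dots> = (\<Sum>i\<in>{i\<in>{..<M}. i < n}. (\<Sum>k<n. cnj (w i) * T i k * w k))"
    by (subst sum.inter_filter) auto
  also have "{i\<in>{..<M}. i < n} = {..<n}" using nM by auto
  finally show ?thesis unfolding qform_def .
qed

lemma cnj_qform_hermitian:
  assumes "\<And>i k. T k i = cnj (T i k)"
  shows "cnj (qform m T v) = qform m T v"
proof -
  have "cnj (qform m T v) = (\<Sum>i<m. \<Sum>k<m. cnj (v k) * T k i * v i)"
    unfolding qform_def cnj_sum
  proof (intro sum.cong refl)
    fix i k
    have "T k i = cnj (T i k)" by (rule assms)
    thus "cnj (cnj (v i) * T i k * v k) = cnj (v k) * T k i * v i"
      by (simp add: mult.commute mult.left_commute)
  qed
  also have "\<dots> = qform m T v" unfolding qform_def by (rule sum.swap)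
  finally show ?thesis .
qed

lemma qform_hermitian_real:
  assumes "\<And>i k. T k i = cnj (T i k)"
  shows "qform m T v = of_real (Re (qform m T v))"
  using cnj_qform_hermitian[of T m v, OF assms] by (metis Reals_cnj_iff of_real_Re)

lemma sum_cnj_mult_self: "(\<Sum>i<(n::nat). cnj (v i) * v i) = complex_of_real (\<Sum>i<n. (cmod (v i))\<^sup>2)"
proof -
  have "complex_of_real (\<Sum>i<n. (cmod (v i))\<^sup>2) = (\<Sum>i<n. complex_of_real ((cmod (v i))\<^sup>2))"
    by (rule of_real_sum)
  also have "\<dots> = (\<Sum>i<n. cnj (v i) * v i)"
    by (rule sum.cong) (simp_all only: complex_norm_square mult.commute)
  finally show ?thesis by simp
qed

lemma qform_add_diag:
  assumes "\<And>i k. i < n \<Longrightarrow> k < n \<Longrightarrow> M' i k = M i k + (if i = k then d else 0)"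
  shows "qform n M' v = qform n M v + d * (\<Sum>i<n. cnj (v i) * v i)"
proof -
  have "qform n M' v = (\<Sum>i<n. \<Sum>k<n. cnj (v i) * M i k * v k + (if i = k then d * (cnj (v i) * v i) else 0))"
    unfolding qform_def by (intro sum.cong refl) (auto simp: assms algebra_simps)
  then show ?thesis
    by (simp add: qform_def sum.distrib sum_distrib_left)
qed

lemma square_system_solvable:
  fixes C :: "nat \<Rightarrow> nat \<Rightarrow> complex" and b :: "nat \<Rightarrow> complex"
  assumes inj: "\<And>v. (\<forall>i<m. (\<Sum>k<m. C i k * v k) = 0) \<Longrightarrow> \<forall>i<m. v i = 0"
  shows "\<exists>w. \<forall>i<m. (\<Sum>k<m. C i k * w k) = b i"
proof -
  define A where "A = mat m m (\<lambda>(i,k). C i k)"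
  have A: "A \<in> carrier_mat m m" unfolding A_def by simp
  have mult_A: "(A *\<^sub>v v) $ i = (\<Sum>k<m. C i k * v $ k)" if "v \<in> carrier_vec m" "i < m" for v i
    using that by (simp add: A_def mult_mat_vec_def scalar_prod_def atLeast0LessThan)
  have "det A \<noteq> 0"
  proof
    assume "det A = 0"
    then obtain v where v: "v \<in> carrier_vec m" "v \<noteq> 0\<^sub>v m" "A *\<^sub>v v = 0\<^sub>v m"
      using det_0_iff_vec_prod_zero_field[OF A] by auto
    have "\<forall>i<m. (\<Sum>k<m. C i k * v $ k) = 0"
      using v(3) by (auto simp: mult_A[OF v(1), symmetric])
    from inj[OF this] have "v = 0\<^sub>v m" using v(1) by (auto intro!: eq_vecI)
    with v(2) show False by simp
  qed
  from det_non_zero_imp_unit[OF A this, of "()"]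
  obtain B where B: "B \<in> carrier_mat m m" "A * B = 1\<^sub>m m"
    by (auto simp: Units_def ring_mat_def)
  define w where "w = B *\<^sub>v vec m b"
  have w: "w \<in> carrier_vec m" using B(1) by (simp add: w_def)
  have "A *\<^sub>v w = vec m b"
    using assoc_mult_mat_vec[OF A B(1), of "vec m b"] B(2) by (simp add: w_def)
  then have "\<forall>i<m. (\<Sum>k<m. C i k * w $ k) = b i"
    by (auto simp: mult_A[OF w, symmetric])
  then show ?thesis by blast
qed

lemma hermitian_solution_adjoint:
  fixes C :: "nat \<Rightarrow> nat \<Rightarrow> complex"
  assumes herm: "\<And>i k. i < m \<Longrightarrow> k < m \<Longrightarrow> C k i = cnj (C i k)"
    and sol: "\<And>i. i < m \<Longrightarrow> (\<Sum>k<m. C i k * g k) = b i"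
  shows "(\<Sum>i<m. cnj (g i) * (\<Sum>k<m. C i k * y k)) = (\<Sum>k<m. cnj (b k) * y k)"
proof -
  have row: "(\<Sum>i<m. cnj (g i) * C i k) = cnj (b k)" if k: "k < m" for k
  proof -
    have "(\<Sum>i<m. cnj (g i) * C i k) = cnj (\<Sum>i<m. C k i * g i)"
      unfolding cnj_sum by (intro sum.cong refl) (simp add: herm[OF _ k] mult.commute)
    then show ?thesis using sol[OF k] by simp
  qed
  have "(\<Sum>i<m. cnj (g i) * (\<Sum>k<m. C i k * y k)) = (\<Sum>i<m. \<Sum>k<m. cnj (g i) * C i k * y k)"
    by (simp add: sum_distrib_left mult.assoc)
  also have "\<dots> = (\<Sum>k<m. (\<Sum>i<m. cnj (g i) * C i k) * y k)"
    by (subst sum.swap) (simp add: sum_distrib_right)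
  finally show ?thesis by (simp add: row)
qed

subsection \<open>Completing a positive semidefinite matrix at a corner\<close>

text \<open>A Schur-complement identity: if the corner entry \<open>X\<close> is chosen via the solutions \<open>g\<close>, \<open>h\<close>
  of the middle block against the first and last columns, the quadratic form of the completed
  matrix splits into the form of the middle block plus two multiples of forms of the leading
  and trailing principal submatrices.\<close>
lemma psd_corner_completion_identity:
  fixes M :: "nat \<Rightarrow> nat \<Rightarrow> complex" and m :: nat and g h v :: "nat \<Rightarrow> complex"
  defines "C \<equiv> \<lambda>i k. M (Suc i) (Suc k)"
    and "X \<equiv> \<Sum>j<m. M 0 (Suc j) * h j"
    and "w \<equiv> \<lambda>j. v (Suc j) + g j * v 0 + h j * v (Suc m)"
  assumes herm: "\<And>i k. i < Suc (Suc m) \<Longrightarrow> k < Suc (Suc m) \<Longrightarrow> M k i = cnj (M i k)"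
    and g: "\<And>i. i < m \<Longrightarrow> (\<Sum>k<m. C i k * g k) = M (Suc i) 0"
    and h: "\<And>i. i < m \<Longrightarrow> (\<Sum>k<m. C i k * h k) = M (Suc i) (Suc m)"
  shows "qform (Suc (Suc m))
      (\<lambda>i k. if i = 0 \<and> k = Suc m then X else if i = Suc m \<and> k = 0 then cnj X else M i k) v
    = qform m C w
      + cnj (v 0) * v 0 * qform (Suc m) M (\<lambda>i. if i = 0 then 1 else - g (i - 1))
      + cnj (v (Suc m)) * v (Suc m)
          * qform (Suc m) (\<lambda>i k. M (Suc i) (Suc k)) (\<lambda>i. if i < m then - h i else 1)"
proof -
  define a e c where "a = v 0" and "e = v (Suc m)" and "c = (\<lambda>j. v (Suc j))"
  have w_eq: "w = (\<lambda>j. c j + g j * a + h j * e)" by (simp add: w_def a_def e_def c_def)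
  have Ch: "C k i = cnj (C i k)" if "i < m" "k < m" for i k
    unfolding C_def using herm[of "Suc i" "Suc k"] that by simp
  have cnj_first: "cnj (M (Suc k) 0) = M 0 (Suc k)" if "k < m" for k
    using herm[of 0 "Suc k"] that by simp
  have cnj_last: "cnj (M (Suc k) (Suc m)) = M (Suc m) (Suc k)" if "k < m" for k
    using herm[of "Suc m" "Suc k"] that by simp
  have g_adj: "(\<Sum>i<m. cnj (g i) * (\<Sum>k<m. C i k * y k)) = (\<Sum>k<m. M 0 (Suc k) * y k)" for y
    by (simp add: hermitian_solution_adjoint[OF Ch g] cnj_first)
  have h_adj: "(\<Sum>i<m. cnj (h i) * (\<Sum>k<m. C i k * y k)) = (\<Sum>k<m. M (Suc m) (Suc k) * y k)" for y
    by (simp add: hermitian_solution_adjoint[OF Ch h] cnj_last)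
  have cX: "cnj X = (\<Sum>k<m. M (Suc m) (Suc k) * g k)"
  proof -
    have "cnj X = (\<Sum>j<m. cnj (h j) * M (Suc j) 0)"
      unfolding X_def cnj_sum by (intro sum.cong refl) (simp add: mult.commute flip: cnj_first)
    also have "\<dots> = (\<Sum>j<m. cnj (h j) * (\<Sum>k<m. C j k * g k))"
      by (simp add: g)
    finally show ?thesis by (simp only: h_adj)
  qed
  define \<gamma> where "\<gamma> = (\<Sum>k<m. M 0 (Suc k) * g k)"
  define \<rho> where "\<rho> = (\<Sum>k<m. M (Suc m) (Suc k) * h k)"
  define s1 where "s1 = (\<Sum>k<m. M 0 (Suc k) * c k)"
  define s2 where "s2 = (\<Sum>i<m. cnj (c i) * M (Suc i) 0)"
  define s3 where "s3 = (\<Sum>i<m. cnj (c i) * M (Suc i) (Suc m))"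
  define s4 where "s4 = (\<Sum>k<m. M (Suc m) (Suc k) * c k)"
  have expand: "qform (Suc (Suc m))
      (\<lambda>i k. if i = 0 \<and> k = Suc m then X else if i = Suc m \<and> k = 0 then cnj X else M i k) v =
        cnj a * M 0 0 * a + cnj a * s1 + cnj a * X * e + s2 * a + qform m C c + s3 * e
      + cnj e * cnj X * a + cnj e * s4 + cnj e * M (Suc m) (Suc m) * e"
    unfolding qform_Suc_Suc_border
      by (simp add: a_def e_def c_def C_def s1_def s2_def s3_def s4_def)
  have Cw: "(\<Sum>k<m. C i k * w k) = (\<Sum>k<m. C i k * c k) + M (Suc i) 0 * a + M (Suc i) (Suc m) * e"
    if "i < m" for i
  proof -
    have "(\<Sum>k<m. C i k * w k)
        = (\<Sum>k<m. C i k * c k) + (\<Sum>k<m. C i k * g k) * a + (\<Sum>k<m. C i k * h k) * e"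
      unfolding w_eq by (simp add: distrib_left sum.distrib sum_distrib_right mult.assoc)
    then show ?thesis using g[OF that] h[OF that] by simp
  qed
  have "qform m C w = (\<Sum>i<m. cnj (c i) * (\<Sum>k<m. C i k * w k))
      + cnj a * (\<Sum>i<m. cnj (g i) * (\<Sum>k<m. C i k * w k))
      + cnj e * (\<Sum>i<m. cnj (h i) * (\<Sum>k<m. C i k * w k))"
    unfolding qform_eq_sum_mult_sum w_eq by (simp add: sum.distrib sum_distrib_left algebra_simps)
  also have "(\<Sum>i<m. cnj (c i) * (\<Sum>k<m. C i k * w k)) = qform m C c + s2 * a + s3 * e"
    unfolding qform_eq_sum_mult_sum s2_def s3_def
    by (simp add: Cw distrib_left sum.distrib sum_distrib_right mult.assoc)
  also have "(\<Sum>i<m. cnj (g i) * (\<Sum>k<m. C i k * w k)) = s1 + \<gamma> * a + X * e"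
    unfolding g_adj s1_def \<gamma>_def X_def w_eq
    by (simp add: distrib_left sum.distrib sum_distrib_right mult.assoc)
  also have "(\<Sum>i<m. cnj (h i) * (\<Sum>k<m. C i k * w k)) = s4 + cnj X * a + \<rho> * e"
    unfolding h_adj s4_def \<rho>_def cX w_eq
    by (simp add: distrib_left sum.distrib sum_distrib_right mult.assoc)
  finally have qform_w: "qform m C w = qform m C c + s2 * a + s3 * e + cnj a * (s1 + \<gamma> * a + X * e)
      + cnj e * (s4 + cnj X * a + \<rho> * e)" .
  have lead: "qform (Suc m) M (\<lambda>i. if i = 0 then 1 else - g (i - 1)) = M 0 0 - \<gamma>"
  proof -
    have "qform m C g = (\<Sum>i<m. cnj (g i) * M (Suc i) 0)"
      unfolding qform_eq_sum_mult_sum by (rule sum.cong) (auto simp: g)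
    then show ?thesis
      unfolding qform_Suc_first \<gamma>_def by (simp add: qform_def C_def sum_negf)
  qed
  have trail: "qform (Suc m) (\<lambda>i k. M (Suc i) (Suc k)) (\<lambda>i. if i < m then - h i else 1)
      = M (Suc m) (Suc m) - \<rho>"
  proof -
    have "qform m (\<lambda>i k. M (Suc i) (Suc k)) (\<lambda>i. if i < m then - h i else 1) = qform m C h"
      unfolding qform_def C_def by (rule sum.cong) (auto intro!: sum.cong)
    moreover have "qform m C h = (\<Sum>i<m. cnj (h i) * M (Suc i) (Suc m))"
      unfolding qform_eq_sum_mult_sum by (rule sum.cong) (auto simp: h)
    ultimately show ?thesis
      unfolding qform_Suc_last \<rho>_def by (simp add: sum_negf)
  qed
  show ?thesis
    unfolding expand qform_w lead trail by (simp add: a_def e_def algebra_simps)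
qed

lemma Re_cnj_mult_self_mult: "Re (cnj a * a * z) = (cmod a)\<^sup>2 * Re z"
proof -
  have "cnj a * a = complex_of_real ((cmod a)\<^sup>2)"
    by (metis complex_norm_square mult.commute)
  then show ?thesis by simp
qed

lemma psd_corner_completion:
  fixes M :: "nat \<Rightarrow> nat \<Rightarrow> complex"
  assumes herm: "\<And>i k. i < Suc (Suc m) \<Longrightarrow> k < Suc (Suc m) \<Longrightarrow> M k i = cnj (M i k)"
    and lead: "re_psd (Suc m) M"
    and trail: "re_psd (Suc m) (\<lambda>i k. M (Suc i) (Suc k))"
    and mid: "\<And>v. (\<forall>i<m. (\<Sum>k<m. M (Suc i) (Suc k) * v k) = 0) \<Longrightarrow> \<forall>i<m. v i = 0"
  shows "\<exists>X. re_psd (Suc (Suc m))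
    (\<lambda>i k. if i = 0 \<and> k = Suc m then X else if i = Suc m \<and> k = 0 then cnj X else M i k)"
proof -
  obtain g where g: "\<And>i. i < m \<Longrightarrow> (\<Sum>k<m. M (Suc i) (Suc k) * g k) = M (Suc i) 0"
    using square_system_solvable[where C="\<lambda>i k. M (Suc i) (Suc k)" and b="\<lambda>i. M (Suc i) 0", OF mid]
      by blast
  obtain h where h: "\<And>i. i < m \<Longrightarrow> (\<Sum>k<m. M (Suc i) (Suc k) * h k) = M (Suc i) (Suc m)"
    using square_system_solvable[where C="\<lambda>i k. M (Suc i) (Suc k)" and b="\<lambda>i. M (Suc i) (Suc m)", OF mid] by blast
  define X where "X = (\<Sum>j<m. M 0 (Suc j) * h j)"
  have middle: "0 \<le> Re (qform m (\<lambda>i k. M (Suc i) (Suc k)) w)" for w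
    using lead[unfolded re_psd_def, rule_format, of "\<lambda>i. if i = 0 then 0 else w (i - 1)"]
    by (simp add: qform_Suc_first)
  have "0 \<le> Re (qform (Suc (Suc m))
    (\<lambda>i k. if i = 0 \<and> k = Suc m then X else if i = Suc m \<and> k = 0 then cnj X else M i k) v)" for v
    unfolding X_def psd_corner_completion_identity[OF herm g h, simplified] plus_complex.sel Re_cnj_mult_self_mult
    using lead trail unfolding re_psd_def
    by (intro add_nonneg_nonneg mult_nonneg_nonneg zero_le_power2 middle) blast+
  then have "re_psd (Suc (Suc m))
    (\<lambda>i k. if i = 0 \<and> k = Suc m then X else if i = Suc m \<and> k = 0 then cnj X else M i k)"
    unfolding re_psd_def by blast
  then show ?thesis by blast
qed

subsection \<open>Extending positive semidefinite Toeplitz matrices\<close>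

lemma toep_Suc_Suc[simp]: "toep u (Suc i) (Suc k) = toep u i k"
  unfolding toep_def by auto

lemma toep_hermitian: "Im (u 0) = 0 \<Longrightarrow> toep u k i = cnj (toep u i k)"
  unfolding toep_def by (cases "i = k") (auto simp: complex_eq_iff)

lemma toep_psd_diag_nonneg: "re_psd n (toep u) \<Longrightarrow> n \<ge> 1 \<Longrightarrow> 0 \<le> Re (u 0)"
  using qform_unit0[of n "toep u"]
    unfolding re_psd_def by (metis toep_def order_refl diff_self_eq_0)

lemma qform_toep_bump_diag:
  "qform n (toep (u(0 := u 0 + complex_of_real d))) v
    = qform n (toep u) v + of_real (d * (\<Sum>i<n. (cmod (v i))\<^sup>2))"
proof -
  have "toep (u(0 := u 0 + complex_of_real d)) i k = toep u i k + (if i = k then of_real d else 0)"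
    for i k
    unfolding toep_def by auto
  then show ?thesis by (subst qform_add_diag) (simp_all add: sum_cnj_mult_self)
qed

lemma sum_norm_sq_pos: "(\<exists>i<(n::nat). v i \<noteq> 0) \<Longrightarrow> 0 < (\<Sum>i<n. (cmod (v i))\<^sup>2)"
proof -
  assume "\<exists>i<n. v i \<noteq> 0"
  then obtain j where j: "j < n" "v j \<noteq> 0" by auto
  have "0 < (cmod (v j))\<^sup>2" using j by simp
  also have "\<dots> \<le> (\<Sum>i<n. (cmod (v i))\<^sup>2)"
    using j by (intro member_le_sum) auto
  finally show ?thesis .
qed

lemma re_psd_toep_bump_diag:
  assumes "re_psd n (toep u)" and "0 \<le> d"
  shows "re_psd n (toep (u(0 := u 0 + complex_of_real d)))"
  using assms unfolding re_psd_def qform_toep_bump_diag by (simp add: sum_nonneg)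

lemma qform_toep_bump_diag_pos:
  assumes "re_psd n (toep u)" and "0 < d" and "\<exists>i<n. v i \<noteq> 0"
  shows "0 < Re (qform n (toep (u(0 := u 0 + complex_of_real d))) v)"
  using assms sum_norm_sq_pos[OF assms(3)] unfolding re_psd_def qform_toep_bump_diag
  by (simp add: add_nonneg_pos)

text \<open>A positive definite Toeplitz matrix can be bordered by one more Toeplitz row and column
  without losing positivity: the new corner entry is the free parameter of
  \<open>psd_corner_completion\<close>, all other entries are forced by the Toeplitz structure.\<close>
lemma toep_psd_extend_step:
  assumes n: "n \<ge> 1" and re: "Im (u 0) = 0"
    and pd: "\<And>v. (\<exists>i<n. v i \<noteq> 0) \<Longrightarrow> 0 < Re (qform n (toep u) v)"
    and psd: "re_psd n (toep u)"
  shows "\<exists>x. re_psd (Suc n) (toep (u(n := x)))"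
proof -
  obtain m where m: "n = Suc m" using n by (cases n) auto
  have mid: "\<forall>i<m. v i = 0" if "\<forall>i<m. (\<Sum>k<m. toep u (Suc i) (Suc k) * v k) = 0" for v
  proof (rule ccontr)
    assume "\<not> (\<forall>i<m. v i = 0)"
    then have "0 < Re (qform n (toep u) (\<lambda>i. if i < m then v i else 0))"
      using m by (intro pd) auto
    moreover have "qform m (toep u) v = 0"
      using that unfolding qform_eq_sum_mult_sum by simp
    moreover have "qform n (toep u) (\<lambda>i. if i < m then v i else 0) = qform m (toep u) v"
      using m by (intro qform_zero_extend) simp
    ultimately show False by simp
  qed
  obtain X where X: "re_psd (Suc (Suc m))
      (\<lambda>i k. if i = 0 \<and> k = Suc m then X else if i = Suc m \<and> k = 0 then cnj X else toep u i k)"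
  proof (rule exE[OF psd_corner_completion[where M="toep u" and m=m, OF toep_hermitian[of u, OF re]]])
    show "re_psd (Suc m) (toep u)" "re_psd (Suc m) (\<lambda>i k. toep u (Suc i) (Suc k))"
      using psd m by simp_all
  qed (use mid in blast)
  have "re_psd (Suc n) (toep (u(n := cnj X)))"
    unfolding re_psd_def
  proof
    fix v
    have "qform (Suc n) (toep (u(n := cnj X))) v = qform (Suc (Suc m))
      (\<lambda>i k. if i = 0 \<and> k = Suc m then X else if i = Suc m \<and> k = 0 then cnj X else toep u i k) v"
      unfolding m by (rule qform_cong) (auto simp: toep_def)
    then show "0 \<le> Re (qform (Suc n) (toep (u(n := cnj X))) v)"
      using X unfolding re_psd_def by simp
  qed
  then show ?thesis by blast
qed

text \<open>Each bordering step needs positive definiteness, which is bought with half of the remaining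
  diagonal shift \<open>\<delta>\<close>.\<close>
lemma toep_psd_extend:
  assumes n: "n \<ge> 1" and re: "Im (u 0) = 0" and psd: "re_psd n (toep u)"
    and M: "n \<le> M" and \<delta>: "\<delta> > 0"
  shows "\<exists>u'. re_psd M (toep u') \<and> (\<forall>d. 0 < d \<and> d < n \<longrightarrow> u' d = u d)
            \<and> u' 0 = u 0 + complex_of_real \<delta>"
  using M \<delta>
proof (induction M arbitrary: \<delta> rule: dec_induct)
  case base
  have "re_psd n (toep (u(0 := u 0 + complex_of_real \<delta>)))"
    using re_psd_toep_bump_diag[OF psd] base by simp
  then show ?case
    by (intro exI[of _ "u(0 := u 0 + complex_of_real \<delta>)"] conjI) (assumption, simp_all)
next
  case (step k)
  obtain u1 where u1: "re_psd k (toep u1)" "\<forall>d. 0 < d \<and> d < n \<longrightarrow> u1 d = u d"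
     "u1 0 = u 0 + complex_of_real (\<delta>/2)"
    using step.IH[of "\<delta>/2"] step.prems by auto
  define u2 where "u2 = u1(0 := u1 0 + complex_of_real (\<delta>/2))"
  have k: "k \<ge> 1" using step n by simp
  obtain x where x: "re_psd (Suc k) (toep (u2(k := x)))"
  proof (rule exE[OF toep_psd_extend_step[OF k]])
    show "Im (u2 0) = 0" using re u1(3) by (simp add: u2_def)
    show "\<And>v. (\<exists>i<k. v i \<noteq> 0) \<Longrightarrow> 0 < Re (qform k (toep u2) v)"
      unfolding u2_def using u1(1) step.prems by (intro qform_toep_bump_diag_pos) auto
    show "re_psd k (toep u2)"
      unfolding u2_def using u1(1) step.prems by (intro re_psd_toep_bump_diag) auto
  qed
  show ?case
  proof (intro exI conjI allI impI)
    show "re_psd (Suc k) (toep (u2(k := x)))" by (rule x)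
    show "(u2(k := x)) d = u d" if "0 < d \<and> d < n" for d
      using that u1(2) step(1) by (auto simp: u2_def)
    show "(u2(k := x)) 0 = u 0 + complex_of_real \<delta>"
      using k u1(3) by (simp add: u2_def flip: of_real_add)
  qed
qed

subsection \<open>Sums over a Fourier grid\<close>

definition e2pi :: "real \<Rightarrow> complex" where
  "e2pi x = cis (2 * pi * x)"

lemma e2pi_zero [simp]: "e2pi 0 = 1"
  unfolding e2pi_def by simp

lemma e2pi_add: "e2pi (a + b) = e2pi a * e2pi b"
  unfolding e2pi_def by (simp add: cis_mult distrib_left)

lemma cnj_e2pi: "cnj (e2pi a) = e2pi (- a)"
  unfolding e2pi_def by (simp add: cis_cnj)

lemma e2pi_power: "e2pi a ^ k = e2pi (real k * a)"
  unfolding e2pi_def DeMoivre by (simp add: algebra_simps)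

lemma e2pi_of_int: "e2pi (of_int m) = 1"
  unfolding e2pi_def using cis_multiple_2pi[of "of_int m"] by simp

lemma e2pi_eq_1:
  assumes "e2pi a = 1"
  shows "\<exists>j::int. a = of_int j"
proof -
  have "Re (e2pi a) = cos (2 * pi * a)" by (simp add: e2pi_def)
  hence "cos (2 * pi * a) = 1" using assms by simp
  then obtain j :: int where "2 * pi * a = real_of_int j * 2 * pi"
    using cos_one_2pi_int[of "2*pi*a"] by blast
  hence "a = j" by simp
  thus ?thesis by blast
qed

lemma sum_e2pi_grid:
  fixes N :: nat and m :: int
  assumes N: "N > 0" and m: "\<bar>m\<bar> < int N"
  shows "(\<Sum>k<N. e2pi (real k * of_int m / real N)) = (if m = 0 then of_nat N else 0)"
proof (cases "m = 0")
  case True thus ?thesis by simp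
next
  case False
  define z where "z = e2pi (of_int m / real N)"
  have pw: "e2pi (real k * of_int m / real N) = z ^ k" for k
    unfolding z_def e2pi_power by simp
  have zN: "z ^ N = 1" unfolding z_def e2pi_power using N by (simp add: e2pi_of_int)
  have z1: "z \<noteq> 1"
  proof
    assume "z = 1"
    then obtain j :: int where j: "of_int m / real N = of_int j"
      using e2pi_eq_1 unfolding z_def by blast
    hence mj: "m = j * int N"
      using N by (simp add: field_simps) (metis of_int_eq_iff of_int_mult of_int_of_nat_eq)
    show False
    proof (cases "j = 0")
      case True thus False using mj False by simp
    next
      case j0: False
      have "\<bar>m\<bar> = \<bar>j\<bar> * int N" using mj by (simp add: abs_mult)
      also have "\<dots> \<ge> 1 * int N"
      proof (rule mult_right_mono)
        show "1 \<le> \<bar>j\<bar>" using j0 by (cases "j > 0") auto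
      qed simp
      finally show False using m by simp
    qed
  qed
  have "(\<Sum>k<N. e2pi (real k * of_int m / real N)) = (\<Sum>k<N. z ^ k)" by (simp add: pw)
  also have "\<dots> = 0" using geometric_sum[OF z1, of N] zN by simp
  finally show ?thesis using False by simp
qed

lemma sum_swap3:
  "(\<Sum>k\<in>K. \<Sum>i\<in>I. \<Sum>j\<in>J. f k i j) = (\<Sum>i\<in>I. \<Sum>j\<in>J. \<Sum>k\<in>K. (f k i j :: 'a::comm_monoid_add))"
  by (simp add: sum.swap[of _ K] sum.swap[of _ K J])

lemma count_pairs_with_difference:
  fixes D :: int
  assumes D: "\<bar>D\<bar> \<le> int M"
  shows "(\<Sum>s<M. \<Sum>s'<M. if int s - int s' = D then (1::complex) else 0) = of_int (int M - \<bar>D\<bar>)"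
proof -
  have inner: "(\<Sum>s'<M. if int s - int s' = D then (1::complex) else 0)
       = (if 0 \<le> int s - D \<and> int s - D < int M then 1 else 0)" for s
  proof -
    have "(\<Sum>s'<M. if int s - int s' = D then (1::complex) else 0)
        = (\<Sum>s'<M. if 0 \<le> int s - D then (if s' = nat (int s - D) then 1 else 0) else 0)"
      by (rule sum.cong) auto
    also have "\<dots> = (if 0 \<le> int s - D \<and> int s - D < int M then 1 else 0)"
      by auto
    finally show ?thesis .
  qed
  have "(\<Sum>s<M. \<Sum>s'<M. if int s - int s' = D then (1::complex) else 0)
      = (\<Sum>s<M. if 0 \<le> int s - D \<and> int s - D < int M then 1 else 0)"
    by (simp add: inner)
  also have "\<dots> = (\<Sum>s\<in>{s\<in>{..<M}. 0 \<le> int s - D \<and> int s - D < int M}. 1)"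
    by (rule sum.inter_filter[OF finite_lessThan, symmetric])
  also have "\<dots> = of_nat (card {s\<in>{..<M}. 0 \<le> int s - D \<and> int s - D < int M})"
    by (rule sum_constant[THEN trans]) simp
  also have "\<dots> = of_int (int M - \<bar>D\<bar>)"
  proof (cases "D \<ge> 0")
    case True
    have "{s\<in>{..<M}. 0 \<le> int s - D \<and> int s - D < int M} = {nat D..<M}" using True by auto
    thus ?thesis using True D by simp
  next
    case False
    have "{s\<in>{..<M}. 0 \<le> int s - D \<and> int s - D < int M} = {..<nat (int M + D)}" using False by auto
    thus ?thesis using False D by simp
  qed
  finally show ?thesis .
qed

lemma toep_diff_invariant:
  assumes h: "int s - int s' = int r - int r'"
  shows "toep u s s' = toep u r r'"
proof -
  have a: "s' \<le> s \<longleftrightarrow> r' \<le> r" using h by linarith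
  have b: "s - s' = r - r'" using h by linarith
  have c: "s' - s = r' - r" using h by linarith
  show ?thesis unfolding toep_def a b c ..
qed

text \<open>With \<open>a\<^sub>k = (e(ks/N))\<^sub>s\<close> the grid vectors of length \<open>M\<close> (resp.\ \<open>n\<close>), \<open>grid_form M N T k\<close>
  is \<open>a\<^sub>k\<^sup>* T a\<^sub>k\<close> and \<open>grid_coeff n N v k\<close> is \<open>v\<^sup>* a\<^sub>k\<close>.\<close>
definition grid_form :: "nat \<Rightarrow> nat \<Rightarrow> (nat \<Rightarrow> nat \<Rightarrow> complex) \<Rightarrow> nat \<Rightarrow> complex" where
  "grid_form M N T k = qform M T (\<lambda>s. e2pi (real k * real s / real N))"

definition grid_coeff :: "nat \<Rightarrow> nat \<Rightarrow> (nat \<Rightarrow> complex) \<Rightarrow> nat \<Rightarrow> complex" where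
  "grid_coeff n N v k = (\<Sum>r<n. cnj (v r) * e2pi (real k * real r / real N))"

lemma grid_form_mult_norm_coeff:
  "grid_form M N T k * (grid_coeff n N v k * cnj (grid_coeff n N v k))
    = (\<Sum>r<n. \<Sum>r'<n. \<Sum>s<M. \<Sum>s'<M.
        cnj (v r) * v r' * T s s' * e2pi (real k * of_int (int s' - int s + int r - int r') / real N))"
proof -
  have b: "grid_coeff n N v k * cnj (grid_coeff n N v k) =
     (\<Sum>r<n. \<Sum>r'<n. cnj (v r) * e2pi (real k * real r / real N) * (v r' * e2pi (- (real k * real r' / real N))))"
    unfolding grid_coeff_def cnj_sum sum_product by (simp add: cnj_e2pi)
  have p: "grid_form M N T k = (\<Sum>s<M. \<Sum>s'<M.
      e2pi (- (real k * real s / real N)) * T s s' * e2pi (real k * real s' / real N))"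
    unfolding grid_form_def qform_def by (simp add: cnj_e2pi)
  have "grid_form M N T k * (grid_coeff n N v k * cnj (grid_coeff n N v k)) =
     (\<Sum>r<n. \<Sum>r'<n. \<Sum>s<M. \<Sum>s'<M.
        (e2pi (- (real k * real s / real N)) * T s s' * e2pi (real k * real s' / real N))
        * (cnj (v r) * e2pi (real k * real r / real N) * (v r' * e2pi (- (real k * real r' / real N)))))"
    unfolding b p by (simp add: sum_distrib_left sum_distrib_right sum.swap[of _ "{..<M}" "{..<n}"])
  also have "\<dots> = (\<Sum>r<n. \<Sum>r'<n. \<Sum>s<M. \<Sum>s'<M.
      cnj (v r) * v r' * T s s' * e2pi (real k * of_int (int s' - int s + int r - int r') / real N))"
  proof (intro sum.cong refl)
    fix r r' s s'
    have "e2pi (- (real k * real s / real N)) * e2pi (real k * real s' / real N)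
        * e2pi (real k * real r / real N) * e2pi (- (real k * real r' / real N))
      = e2pi (real k * of_int (int s' - int s + int r - int r') / real N)"
      unfolding e2pi_add[symmetric]
      by (rule arg_cong[where f=e2pi]) (simp add: add_divide_distrib diff_divide_distrib algebra_simps)
    then show "(e2pi (- (real k * real s / real N)) * T s s' * e2pi (real k * real s' / real N))
        * (cnj (v r) * e2pi (real k * real r / real N) * (v r' * e2pi (- (real k * real r' / real N))))
      = cnj (v r) * v r' * T s s' * e2pi (real k * of_int (int s' - int s + int r - int r') / real N)"
      by (simp add: algebra_simps)
  qed
  finally show ?thesis .
qed

text \<open>Averaging over the grid \<open>k < 2M\<close> kills every term with \<open>s' - s \<noteq> r' - r\<close>; the surviving
  terms see the Toeplitz entry \<open>u(r - r')\<close> once for each of the \<open>M - |r - r'|\<close> admissible pairs.\<close>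
lemma grid_form_weighted_sum:
  assumes N: "N = 2 * M" and nM: "n \<le> M" and n: "n \<ge> 1"
  shows "(\<Sum>k<N. grid_form M N (toep u) k * (grid_coeff n N v k * cnj (grid_coeff n N v k)))
    = of_nat N * (\<Sum>r<n. \<Sum>r'<n. cnj (v r) * v r' * toep u r r' * of_int (int M - \<bar>int r - int r'\<bar>))"
proof -
  define T where "T = toep u"
  define m where "m = (\<lambda>r r' s s'. int s' - int s + int r - int r')"
  define coef where "coef = (\<lambda>r r' s s'. cnj (v r) * v r' * T s s')"
  have Npos: "N > 0" using N nM n by simp
  have "(\<Sum>k<N. grid_form M N T k * (grid_coeff n N v k * cnj (grid_coeff n N v k)))
     = (\<Sum>k<N. \<Sum>r<n. \<Sum>r'<n. \<Sum>s<M. \<Sum>s'<M. coef r r' s s' * e2pi (real k * of_int (m r r' s s') / real N))"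
    by (simp add: grid_form_mult_norm_coeff coef_def m_def)
  also have "\<dots> = (\<Sum>r<n. \<Sum>r'<n. \<Sum>k<N. \<Sum>s<M. \<Sum>s'<M. coef r r' s s' * e2pi (real k * of_int (m r r' s s') / real N))"
    by (rule sum_swap3)
  also have "\<dots> = (\<Sum>r<n. \<Sum>r'<n. \<Sum>s<M. \<Sum>s'<M. \<Sum>k<N. coef r r' s s' * e2pi (real k * of_int (m r r' s s') / real N))"
    by (intro sum.cong refl sum_swap3)
  also have "\<dots> = (\<Sum>r<n. \<Sum>r'<n. \<Sum>s<M. \<Sum>s'<M. coef r r' s s' * (if m r r' s s' = 0 then of_nat N else 0))"
  proof (intro sum.cong refl)
    fix r r' s s' assume "r \<in> {..<n}" "r' \<in> {..<n}" "s \<in> {..<M}" "s' \<in> {..<M}"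
    hence "\<bar>m r r' s s'\<bar> < int N" unfolding m_def N using nM by auto
    thus "(\<Sum>k<N. coef r r' s s' * e2pi (real k * of_int (m r r' s s') / real N)) =
          coef r r' s s' * (if m r r' s s' = 0 then of_nat N else 0)"
      by (simp add: sum_distrib_left[symmetric] sum_e2pi_grid[OF Npos])
  qed
  also have "\<dots> = of_nat N * (\<Sum>r<n. \<Sum>r'<n. cnj (v r) * v r' * toep u r r' * of_int (int M - \<bar>int r - int r'\<bar>))"
    unfolding sum_distrib_left
  proof (intro sum.cong refl)
    fix r r' assume r: "r \<in> {..<n}" "r' \<in> {..<n}"
    have "(\<Sum>s<M. \<Sum>s'<M. coef r r' s s' * (if m r r' s s' = 0 then of_nat N else 0))
      = of_nat N * (cnj (v r) * v r' * toep u r r') * (\<Sum>s<M. \<Sum>s'<M. if int s - int s' = int r - int r' then 1 else 0)"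
      unfolding sum_distrib_left
    proof (intro sum.cong refl)
      fix s s'
      show "coef r r' s s' * (if m r r' s s' = 0 then of_nat N else 0) =
        of_nat N * (cnj (v r) * v r' * toep u r r') * (if int s - int s' = int r - int r' then 1 else 0)"
      proof (cases "int s - int s' = int r - int r'")
        case True
        hence "m r r' s s' = 0" unfolding m_def by simp
        with True show ?thesis
          unfolding coef_def T_def using toep_diff_invariant[OF True, of u] by simp
      next
        case False
        hence "m r r' s s' \<noteq> 0" unfolding m_def by simp
        with False show ?thesis by simp
      qed
    qed
    also have "\<dots> = of_nat N * (cnj (v r) * v r' * toep u r r' * of_int (int M - \<bar>int r - int r'\<bar>))"
      using r nM by (subst count_pairs_with_difference) auto
    finally show "(\<Sum>s<M. \<Sum>s'<M. coef r r' s s' * (if m r r' s s' = 0 then of_nat N else 0))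
      = of_nat N * (cnj (v r) * v r' * toep u r r' * of_int (int M - \<bar>int r - int r'\<bar>))" .
  qed
  finally show ?thesis unfolding T_def .
qed

text \<open>The triangular weights \<open>n - 1 - |r - r'|\<close> count the windows of length \<open>n - 1\<close> containing both
  \<open>r\<close> and \<open>r'\<close>, so the weighted form is a sum of quadratic forms of truncated vectors.\<close>
lemma triangular_weights_window_sum:
  assumes n: "n \<ge> 1"
  shows "(\<Sum>r<n. \<Sum>r'<n. cnj (v r) * v r' * T r r' * of_int (int n - 1 - \<bar>int r - int r'\<bar>))
     = (\<Sum>m<2*n. qform n T (\<lambda>r. if r \<le> m \<and> m < r + n - 1 then v r else 0))"
proof -
  have cnt: "(\<Sum>m<2*n. if (r \<le> m \<and> m < r + n - 1) \<and> (r' \<le> m \<and> m < r' + n - 1) then (1::complex) else 0)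
      = of_int (int n - 1 - \<bar>int r - int r'\<bar>)" if r: "r < n" "r' < n" for r r'
  proof -
    have "(\<Sum>m<2*n. if (r \<le> m \<and> m < r + n - 1) \<and> (r' \<le> m \<and> m < r' + n - 1) then (1::complex) else 0)
        = (\<Sum>m\<in>{m\<in>{..<2*n}. (r \<le> m \<and> m < r + n - 1) \<and> (r' \<le> m \<and> m < r' + n - 1)}. 1)"
      by (rule sum.inter_filter[OF finite_lessThan, symmetric])
    also have "{m\<in>{..<2*n}. (r \<le> m \<and> m < r + n - 1) \<and> (r' \<le> m \<and> m < r' + n - 1)}
        = {max r r'..<min r r' + n - 1}"
      using r by auto
    also have "(\<Sum>m\<in>{max r r'..<min r r' + n - 1}. (1::complex))
        = of_int (int n - 1 - \<bar>int r - int r'\<bar>)"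
      using r n by (simp add: max_def min_def)
    finally show ?thesis .
  qed
  have "(\<Sum>m<2*n. qform n T (\<lambda>r. if r \<le> m \<and> m < r + n - 1 then v r else 0))
     = (\<Sum>m<2*n. \<Sum>r<n. \<Sum>r'<n. cnj (v r) * v r' * T r r' *
          (if (r \<le> m \<and> m < r + n - 1) \<and> (r' \<le> m \<and> m < r' + n - 1) then 1 else 0))"
    unfolding qform_def by (intro sum.cong refl) auto
  also have "\<dots> = (\<Sum>r<n. \<Sum>r'<n. \<Sum>m<2*n. cnj (v r) * v r' * T r r' *
          (if (r \<le> m \<and> m < r + n - 1) \<and> (r' \<le> m \<and> m < r' + n - 1) then 1 else 0))"
    by (rule sum_swap3)
  also have "\<dots> = (\<Sum>r<n. \<Sum>r'<n. cnj (v r) * v r' * T r r' * of_int (int n - 1 - \<bar>int r - int r'\<bar>))"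
  proof (intro sum.cong refl)
    fix r r' assume "r \<in> {..<n}" "r' \<in> {..<n}"
    hence "r < n" "r' < n" by auto
    have "(\<Sum>m<2*n. cnj (v r) * v r' * T r r' *
          (if (r \<le> m \<and> m < r + n - 1) \<and> (r' \<le> m \<and> m < r' + n - 1) then 1 else 0))
      = cnj (v r) * v r' * T r r' * (\<Sum>m<2*n.
          (if (r \<le> m \<and> m < r + n - 1) \<and> (r' \<le> m \<and> m < r' + n - 1) then 1 else 0))"
      by (rule sum_distrib_left[symmetric])
    also have "\<dots> = cnj (v r) * v r' * T r r' * of_int (int n - 1 - \<bar>int r - int r'\<bar>)"
      by (subst cnt[OF \<open>r < n\<close> \<open>r' < n\<close>]) (rule refl)
    finally show "(\<Sum>m<2*n. cnj (v r) * v r' * T r r' *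
          (if (r \<le> m \<and> m < r + n - 1) \<and> (r' \<le> m \<and> m < r' + n - 1) then 1 else 0))
      = cnj (v r) * v r' * T r r' * of_int (int n - 1 - \<bar>int r - int r'\<bar>)" .
  qed
  finally show ?thesis by simp
qed

lemma grid_coeff_unit0: "grid_coeff n N (\<lambda>i. if i = 0 then 1 else 0) k = (if n \<ge> 1 then 1 else 0)"
  unfolding grid_coeff_def
  by (simp add: if_distrib[where f="\<lambda>x. x * _"] if_distrib[where f=cnj] cong del: if_weak_cong)

lemma grid_form_sum:
  assumes N: "N = 2 * M" and nM: "n \<le> M" and n: "n \<ge> 1"
  shows "(\<Sum>k<N. grid_form M N (toep u) k) = of_nat N * of_nat M * u 0"
proof -
  let ?e0 = "\<lambda>i. if i = 0 then 1 else 0"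
  have "(\<Sum>k<N. grid_form M N (toep u) k)
      = (\<Sum>k<N. grid_form M N (toep u) k * (grid_coeff n N ?e0 k * cnj (grid_coeff n N ?e0 k)))"
    using n by (simp add: grid_coeff_unit0)
  also have "\<dots> = of_nat N * of_nat M * u 0"
    unfolding grid_form_weighted_sum[OF N nM n] using n
    by (simp add: if_distrib[where f="\<lambda>x. x * _"] if_distrib[where f="\<lambda>x. _ * x"] if_distrib[where f=cnj]
        cong del: if_weak_cong) (simp add: toep_def)
  finally show ?thesis .
qed

lemma toep_qform_le_grid_average:
  assumes n: "n \<ge> 1" and nM: "n \<le> M" and re: "Im (u 0) = 0"
    and psd': "re_psd M (toep u')" and agree: "\<forall>d. 0 < d \<and> d < n \<longrightarrow> u' d = u d"
    and diag: "u' 0 = u 0 + complex_of_real \<delta>" and \<delta>: "0 \<le> \<delta>"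
  defines "N \<equiv> 2 * M" and "L \<equiv> real (M - n + 1)"
  shows "Re (qform n (toep u) v)
    \<le> (\<Sum>k<N. Re (grid_form M N (toep u') k) * (cmod (grid_coeff n N v k))\<^sup>2) / (real N * L)"
proof -
  have N: "N = 2 * M" and Npos: "N > 0" and L0: "L > 0" using nM n by (simp_all add: N_def L_def)
  define \<phi> where "\<phi> = grid_form M N (toep u')"
  have \<phi>real: "\<phi> k = of_real (Re (\<phi> k))" for k
    unfolding \<phi>_def grid_form_def using re diag by (intro qform_hermitian_real toep_hermitian) simp
  define T' where "T' = toep u'"
  define S where "S = (\<Sum>r<n. \<Sum>r'<n. cnj (v r) * v r' * T' r r' * of_int (int M - \<bar>int r - int r'\<bar>))"
  define W where "W = (\<Sum>r<n. \<Sum>r'<n. cnj (v r) * v r' * T' r r' * of_int (int n - 1 - \<bar>int r - int r'\<bar>))"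
  have SW: "S = of_real L * qform n T' v + W"
  proof -
    have "S = (\<Sum>r<n. \<Sum>r'<n. of_real L * (cnj (v r) * T' r r' * v r')
        + cnj (v r) * v r' * T' r r' * of_int (int n - 1 - \<bar>int r - int r'\<bar>))"
      unfolding S_def
    proof (intro sum.cong refl)
      fix r r'
      have "of_int (int M - \<bar>int r - int r'\<bar>) = (of_real L :: complex)
          + of_int (int n - 1 - \<bar>int r - int r'\<bar>)"
        unfolding L_def using nM by simp
      then show "cnj (v r) * v r' * T' r r' * of_int (int M - \<bar>int r - int r'\<bar>) =
        of_real L * (cnj (v r) * T' r r' * v r') + cnj (v r) * v r' * T' r r' * of_int (int n - 1 - \<bar>int r - int r'\<bar>)"
        by (simp only: distrib_left) (simp add: algebra_simps)
    qed
    then show ?thesis unfolding qform_def W_def by (simp add: sum.distrib sum_distrib_left)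
  qed
  have "0 \<le> Re (qform n T' w)" for w
    using psd' qform_zero_extend[OF nM, of T' w] unfolding re_psd_def T'_def by metis
  then have W0: "0 \<le> Re W"
    unfolding W_def triangular_weights_window_sum[OF n] Re_sum by (intro sum_nonneg)
  have "qform n T' v = qform n (toep (u(0 := u 0 + complex_of_real \<delta>))) v"
    unfolding T'_def using agree diag by (intro qform_cong) (auto simp: toep_def)
  then have QFT': "Re (qform n (toep u) v) \<le> Re (qform n T' v)"
    unfolding qform_toep_bump_diag using \<delta> by (simp add: sum_nonneg)
  have "(\<Sum>k<N. Re (\<phi> k) * (cmod (grid_coeff n N v k))\<^sup>2)
      = Re (\<Sum>k<N. \<phi> k * (grid_coeff n N v k * cnj (grid_coeff n N v k)))"
    unfolding Re_sum
    by (intro sum.cong refl, subst \<phi>real) (simp flip: complex_norm_square)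
  also have "\<dots> = real N * Re S"
    unfolding \<phi>_def S_def T'_def grid_form_weighted_sum[OF N nM n] by simp
  finally have sphi: "(\<Sum>k<N. Re (\<phi> k) * (cmod (grid_coeff n N v k))\<^sup>2) = real N * Re S" .
  have "Re (qform n (toep u) v) \<le> Re (qform n T' v)" by (rule QFT')
  also have "\<dots> \<le> Re S / L" using SW W0 L0 by (simp add: field_simps)
  also have "\<dots> = (\<Sum>k<N. Re (\<phi> k) * (cmod (grid_coeff n N v k))\<^sup>2) / (real N * L)"
    unfolding sphi using Npos by simp
  finally show ?thesis unfolding \<phi>_def .
qed

lemma extension_length_bound:
  fixes a \<epsilon> :: real
  assumes n: "n \<ge> 1" and a: "0 \<le> a" and eps: "0 < \<epsilon>"
  defines "M \<equiv> 2 * n + nat \<lceil>3 * real (n - 1) * a / \<epsilon>\<rceil>"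
  shows "real M * (a + \<epsilon> / 6) / real (M - n + 1) \<le> a + 2 * \<epsilon> / 3"
proof -
  define L where "L = real (M - n + 1)"
  define \<delta> where "\<delta> = \<epsilon> / 6"
  have L0: "L > 0" by (simp add: L_def)
  have M_eq: "real M = L + real (n - 1)" using n unfolding L_def M_def by simp
  have Lge: "3 * real (n - 1) * a / \<epsilon> \<le> L"
  proof -
    have "3 * real (n - 1) * a / \<epsilon> \<le> real (nat \<lceil>3 * real (n - 1) * a / \<epsilon>\<rceil>)"
      by (metis real_nat_ceiling_ge)
    also have "\<dots> \<le> L" unfolding L_def M_def by simp
    finally show ?thesis .
  qed
  have "real M * (a + \<delta>) / L = (a + \<delta>) + real (n - 1) * a / L + real (n - 1) / L * \<delta>"
    using L0 unfolding M_eq by (simp add: field_simps)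
  also have "real (n - 1) * a / L \<le> \<epsilon> / 3"
    using Lge eps L0 by (simp add: field_simps)
  also have "real (n - 1) / L * \<delta> \<le> 1 * \<delta>"
    using L0 eps unfolding \<delta>_def L_def M_def by (intro mult_right_mono) simp_all
  finally show ?thesis unfolding L_def \<delta>_def by simp
qed

text \<open>The extension length \<open>M\<close> of
  \<open>extension_length_bound\<close> makes the edge effect \<open>(n - 1)/(M - n + 1)\<close> of the averaging small.\<close>
lemma toep_grid_domination:
  assumes n: "n \<ge> 1" and re: "Im (u 0) = 0" and psd: "re_psd n (toep u)" and eps: "\<epsilon> > 0"
  shows "\<exists>N>0. n \<le> N \<and> (\<exists>E. (\<forall>k<N. 0 < E k) \<and> (\<Sum>k<N. E k) \<le> Re (u 0) + \<epsilon> \<and>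
     (\<forall>v. Re (qform n (toep u) v) \<le> (\<Sum>k<N. E k * (cmod (grid_coeff n N v k))\<^sup>2)))"
proof -
  define a where "a = Re (u 0)"
  have a0: "a \<ge> 0" unfolding a_def using toep_psd_diag_nonneg[OF psd n] .
  define M where "M = 2 * n + nat \<lceil>3 * real (n - 1) * a / \<epsilon>\<rceil>"
  have nM: "n \<le> M" unfolding M_def by simp
  obtain u' where u': "re_psd M (toep u')" "\<forall>d. 0 < d \<and> d < n \<longrightarrow> u' d = u d"
      "u' 0 = u 0 + complex_of_real (\<epsilon> / 6)"
    using toep_psd_extend[OF n re psd nM] eps by (metis divide_pos_pos zero_less_numeral)
  define N where "N = 2 * M"
  define L where "L = real (M - n + 1)"
  have Npos: "N > 0" and L0: "L > 0" using nM n by (simp_all add: N_def L_def)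
  define \<phi> where "\<phi> = (\<lambda>k. grid_form M N (toep u') k)"
  have \<phi>nn: "Re (\<phi> k) \<ge> 0" for k
    using u'(1) unfolding \<phi>_def grid_form_def re_psd_def by blast
  define E where "E = (\<lambda>k. Re (\<phi> k) / (real N * L) + \<epsilon> / (3 * real N))"
  have Epos: "\<forall>k<N. 0 < E k" unfolding E_def using \<phi>nn L0 Npos eps
    by (simp add: add_nonneg_pos)
  have "(\<Sum>k<N. Re (\<phi> k)) = real N * real M * (a + \<epsilon> / 6)"
  proof -
    have "(\<Sum>k<N. \<phi> k) = of_nat N * of_nat M * u' 0"
      unfolding \<phi>_def by (rule grid_form_sum[OF N_def nM n])
    then show ?thesis using u'(3) by (simp add: a_def flip: Re_sum)
  qed
  then have "(\<Sum>k<N. E k) = real M * (a + \<epsilon> / 6) / L + \<epsilon> / 3"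
    unfolding E_def using Npos L0 by (simp add: sum.distrib flip: sum_divide_distrib)
  also have "\<dots> \<le> Re (u 0) + \<epsilon>"
    using extension_length_bound[OF n a0 eps] unfolding a_def L_def M_def by simp
  finally have sumE: "(\<Sum>k<N. E k) \<le> Re (u 0) + \<epsilon>" .
  have bound: "Re (qform n (toep u) v) \<le> (\<Sum>k<N. E k * (cmod (grid_coeff n N v k))\<^sup>2)" for v
  proof -
    have "Re (qform n (toep u) v) \<le> (\<Sum>k<N. Re (\<phi> k) * (cmod (grid_coeff n N v k))\<^sup>2) / (real N * L)"
      unfolding \<phi>_def N_def L_def using toep_qform_le_grid_average[OF n nM re u'] eps by simp
    also have "\<dots> = (\<Sum>k<N. Re (\<phi> k) / (real N * L) * (cmod (grid_coeff n N v k))\<^sup>2)"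
      by (simp add: sum_divide_distrib)
    also have "\<dots> \<le> (\<Sum>k<N. E k * (cmod (grid_coeff n N v k))\<^sup>2)"
      unfolding E_def using eps by (intro sum_mono) (simp add: distrib_right)
    finally show ?thesis .
  qed
  have "n \<le> N" using nM by (simp add: N_def)
  then show ?thesis using Npos Epos sumE bound by blast
qed

subsection \<open>Atomic norms\<close>

lemma atom_e2pi: "atom f \<phi> t = e2pi (f * real t) * cis \<phi>"
proof -
  have "atom f \<phi> t = cis (2 * pi * f * real t + \<phi>)" unfolding atom_def by (simp add: cis_conv_exp)
  also have "\<dots> = cis (2 * pi * (f * real t)) * cis \<phi>" by (simp add: cis_mult mult.assoc)
  finally show ?thesis unfolding e2pi_def .
qed

lemma polar_phase: "\<exists>\<phi>. \<phi> \<in> {0..<2*pi} \<and> c = complex_of_real (cmod c) * cis \<phi>"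
proof -
  define \<phi> where "\<phi> = (if Arg c \<ge> 0 then Arg c else Arg c + 2 * pi)"
  have "- pi < Arg c" "Arg c \<le> pi" using Arg_bounded by auto
  then have "\<phi> \<in> {0..<2*pi}" unfolding \<phi>_def using pi_gt_zero by auto
  moreover have "cis \<phi> = cis (Arg c)" unfolding \<phi>_def by (auto simp: cis_mult[symmetric])
  moreover have "c = complex_of_real (cmod c) * cis (Arg c)"
    using rcis_cmod_Arg[of c] by (simp add: rcis_def)
  ultimately show ?thesis by metis
qed

abbreviation atomic_costs :: "nat \<Rightarrow> (nat \<Rightarrow> complex) \<Rightarrow> real set" where
  "atomic_costs n x \<equiv> {(\<Sum>k<m. cmod (c k)) | (m::nat) (c::nat \<Rightarrow> complex) (f::nat \<Rightarrow> real) (\<phi>::nat \<Rightarrow> real).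
      (\<forall>k<m. f k \<in> {0..1} \<and> \<phi> k \<in> {0..<2*pi}) \<and>
      (\<forall>t<n. x t = (\<Sum>k<m. complex_of_real (cmod (c k)) * atom (f k) (\<phi> k) t))}"

lemma atomic_costs_bdd_below: "bdd_below (atomic_costs n x)"
  by (rule bdd_belowI[of _ 0]) (auto intro: sum_nonneg)

text \<open>Complex coefficients are allowed here: their phases are absorbed into the atoms.\<close>
lemma atomic_costs_mem:
  fixes m :: nat and c :: "nat \<Rightarrow> complex" and f :: "nat \<Rightarrow> real"
  assumes f: "\<forall>k<m. f k \<in> {0..1}"
    and x: "\<forall>t<n. x t = (\<Sum>k<m. c k * e2pi (f k * real t))"
  shows "(\<Sum>k<m. cmod (c k)) \<in> atomic_costs n x"
proof -
  have "\<forall>k. \<exists>p. p \<in> {0..<2*pi} \<and> c k = complex_of_real (cmod (c k)) * cis p"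
    using polar_phase by blast
  then obtain \<phi> where ph: "\<And>k. \<phi> k \<in> {0..<2*pi} \<and> c k = complex_of_real (cmod (c k)) * cis (\<phi> k)"
    by metis
  have "c k * e2pi (f k * real t) = complex_of_real (cmod (c k)) * atom (f k) (\<phi> k) t" for k t
  proof -
    have "c k * e2pi (f k * real t)
        = complex_of_real (cmod (c k)) * cis (\<phi> k) * e2pi (f k * real t)"
      using ph[of k] by metis
    then show ?thesis by (simp add: atom_e2pi mult.commute mult.left_commute)
  qed
  then have "\<forall>t<n. x t = (\<Sum>k<m. complex_of_real (cmod (c k)) * atom (f k) (\<phi> k) t)"
    using x by simp
  then show ?thesis using f ph by blast
qed

lemma atomic_norm_le:
  fixes m :: nat and c :: "nat \<Rightarrow> complex" and f :: "nat \<Rightarrow> real"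
  assumes "\<forall>k<m. f k \<in> {0..1}" and "\<forall>t<n. x t = (\<Sum>k<m. c k * e2pi (f k * real t))"
  shows "atomic_norm n x \<le> (\<Sum>k<m. cmod (c k))"
  unfolding atomic_norm_def
    by (rule cInf_lower[OF atomic_costs_mem[OF assms] atomic_costs_bdd_below])

text \<open>Discrete Fourier inversion on the \<open>n\<close>-point grid.\<close>
lemma grid_representation_exists:
  assumes n: "n \<ge> 1"
  shows "\<exists>(m::nat) (c::nat\<Rightarrow>complex) (f::nat\<Rightarrow>real).
    (\<forall>k<m. f k \<in> {0..1}) \<and> (\<forall>t<n. x t = (\<Sum>k<m. c k * e2pi (f k * real t)))"
proof -
  define c where "c = (\<lambda>k. (\<Sum>s<n. x s * e2pi (- (real k * real s / real n))) / of_nat n)"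
  define f where "f = (\<lambda>k. real k / real n)"
  have "\<forall>k<n. f k \<in> {0..1}" unfolding f_def by auto
  moreover have "\<forall>t<n. x t = (\<Sum>k<n. c k * e2pi (f k * real t))"
  proof (intro allI impI)
    fix t assume t: "t < n"
    have "(\<Sum>k<n. c k * e2pi (f k * real t))
        = (\<Sum>k<n. \<Sum>s<n. x s * e2pi (real k * of_int (int t - int s) / real n)) / of_nat n"
      unfolding c_def f_def sum_divide_distrib sum_distrib_right
    proof (intro sum.cong refl)
      fix k s
      have "e2pi (- (real k * real s / real n)) * e2pi (real k / real n * real t)
          = e2pi (real k * of_int (int t - int s) / real n)"
        unfolding e2pi_add[symmetric]
          by (rule arg_cong[where f=e2pi]) (simp add: diff_divide_distrib algebra_simps)
      thus "x s * e2pi (- (real k * real s / real n)) / of_nat n * e2pi (real k / real n * real t) =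
          x s * e2pi (real k * of_int (int t - int s) / real n) / of_nat n"
        by (simp add: mult.assoc)
    qed
    also have "\<dots> = (\<Sum>s<n. x s * (\<Sum>k<n. e2pi (real k * of_int (int t - int s) / real n))) / of_nat n"
      by (subst sum.swap) (simp add: sum_distrib_left)
    also have "\<dots> = (\<Sum>s<n. if s = t then x s * of_nat n else 0) / of_nat n"
    proof -
      have "(\<Sum>k<n. e2pi (real k * of_int (int t - int s) / real n))
          = (if s = t then of_nat n else 0)"
        if "s < n" for s
        using sum_e2pi_grid[of n "int t - int s"] n t that by auto
      thus ?thesis by (intro arg_cong2[where f="(/)"] sum.cong refl) auto
    qed
    also have "\<dots> = x t" using t n by simp
    finally show "x t = (\<Sum>k<n. c k * e2pi (f k * real t))" by simp
  qed
  ultimately show ?thesis by blast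
qed

lemma atomic_costs_nonempty:
  assumes "n \<ge> 1"
  shows "atomic_costs n x \<noteq> {}"
proof -
  obtain m :: nat and c :: "nat \<Rightarrow> complex" and f :: "nat \<Rightarrow> real"
    where "\<forall>k<m. f k \<in> {0..1}" "\<forall>t<n. x t = (\<Sum>k<m. c k * e2pi (f k * real t))"
    using grid_representation_exists[OF assms] by blast
  from atomic_costs_mem[OF this] show ?thesis by blast
qed

lemma atomic_norm_nonneg: "n \<ge> 1 \<Longrightarrow> 0 \<le> atomic_norm n x"
  unfolding atomic_norm_def
    by (rule cInf_greatest[OF atomic_costs_nonempty]) (auto intro: sum_nonneg)

lemma atomic_norm_approx:
  assumes n: "n \<ge> 1" and e: "e > 0"
  shows "\<exists>m::nat. \<exists>\<rho> f \<phi>. (\<forall>k<m. 0 \<le> \<rho> k \<and> f k \<in> {0..1}) \<and>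
      (\<forall>t<n. x t = (\<Sum>k<m. complex_of_real (\<rho> k) * atom (f k) (\<phi> k) t)) \<and>
      (\<Sum>k<m. \<rho> k) < atomic_norm n x + e"
proof -
  have "Inf (atomic_costs n x) < atomic_norm n x + e" using e unfolding atomic_norm_def by simp
  from cInf_lessD[OF atomic_costs_nonempty[OF n] this]
  obtain m c f \<phi> where "(\<Sum>k<m::nat. cmod (c k)) < atomic_norm n x + e"
    "\<forall>k<m. f k \<in> {0..1} \<and> \<phi> k \<in> {0..<2*pi}"
    "\<forall>t<n. x t = (\<Sum>k<m. complex_of_real (cmod (c k)) * atom (f k) (\<phi> k) t)"
    by blast
  then show ?thesis by (intro exI[of _ m] exI[of _ "\<lambda>k. cmod (c k)"] exI[of _ f] exI[of _ \<phi>]) auto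
qed

text \<open>\<open>grid_synth n N E w\<close> is \<open>(\<Sum>\<^sub>k E\<^sub>k a\<^sub>k a\<^sub>k\<^sup>*) w\<close>, the image of \<open>w\<close> under the grid atom
  combination that dominates a Toeplitz matrix in \<open>toep_grid_domination\<close>.\<close>
definition grid_synth :: "nat \<Rightarrow> nat \<Rightarrow> (nat \<Rightarrow> real) \<Rightarrow> (nat \<Rightarrow> complex) \<Rightarrow> nat \<Rightarrow> complex" where
  "grid_synth n N E w r
      = (\<Sum>k<N. of_real (E k) * cnj (grid_coeff n N w k) * e2pi (real k * real r / real N))"

lemma cnj_grid_coeff: "cnj (grid_coeff n N w k) = (\<Sum>r<n. w r * e2pi (- (real k * real r / real N)))"
  unfolding grid_coeff_def cnj_sum by (simp add: cnj_e2pi)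

lemma inner_grid_synth:
  "(\<Sum>r<n. cnj (w r) * grid_synth n N E w r)
    = (\<Sum>k<N. of_real (E k) * (grid_coeff n N w k * cnj (grid_coeff n N w k)))"
proof -
  have "(\<Sum>r<n. cnj (w r) * grid_synth n N E w r)
      = (\<Sum>k<N. \<Sum>r<n. of_real (E k) * cnj (grid_coeff n N w k)
          * (cnj (w r) * e2pi (real k * real r / real N)))"
    unfolding grid_synth_def sum_distrib_left by (subst sum.swap) (simp add: algebra_simps)
  also have "\<dots> = (\<Sum>k<N. of_real (E k) * cnj (grid_coeff n N w k) * grid_coeff n N w k)"
    unfolding grid_coeff_def by (simp add: sum_distrib_left)
  finally show ?thesis by (simp add: algebra_simps)
qed

lemma grid_parseval:
  assumes N: "N > 0" and nN: "n \<le> N"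
  shows "(\<Sum>k<N. grid_coeff n N v k * cnj (grid_coeff n N v k)) = of_nat N * (\<Sum>r<n. cnj (v r) * v r)"
proof -
  have "(\<Sum>k<N. grid_coeff n N v k * cnj (grid_coeff n N v k)) =
     (\<Sum>k<N. \<Sum>r<n. \<Sum>r'<n. cnj (v r) * v r' * e2pi (real k * of_int (int r - int r') / real N))"
    unfolding grid_coeff_def cnj_sum sum_product
  proof (intro sum.cong refl)
    fix k r r'
    have "e2pi (real k * real r / real N) * e2pi (- (real k * real r' / real N))
        = e2pi (real k * of_int (int r - int r') / real N)"
      unfolding e2pi_add[symmetric]
        by (rule arg_cong[where f=e2pi]) (simp add: diff_divide_distrib algebra_simps)
    thus "cnj (v r) * e2pi (real k * real r / real N) * cnj (cnj (v r') * e2pi (real k * real r' / real N)) =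
       cnj (v r) * v r' * e2pi (real k * of_int (int r - int r') / real N)"
      by (simp add: cnj_e2pi algebra_simps)
  qed
  also have "\<dots> = (\<Sum>r<n. \<Sum>r'<n. \<Sum>k<N. cnj (v r) * v r' * e2pi (real k * of_int (int r - int r') / real N))"
    by (rule sum_swap3)
  also have "\<dots> = (\<Sum>r<n. \<Sum>r'<n. if r' = r then cnj (v r) * v r' * of_nat N else 0)"
  proof (intro sum.cong refl)
    fix r r' assume "r \<in> {..<n}" "r' \<in> {..<n}"
    hence "\<bar>int r - int r'\<bar> < int N" using nN by auto
    thus "(\<Sum>k<N. cnj (v r) * v r' * e2pi (real k * of_int (int r - int r') / real N)) =
        (if r' = r then cnj (v r) * v r' * of_nat N else 0)"
    proof -
      assume b: "\<bar>int r - int r'\<bar> < int N"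
      have g: "(\<Sum>k<N. e2pi (real k * of_int (int r - int r') / real N))
          = (if int r - int r' = 0 then of_nat N else 0)"
        by (rule sum_e2pi_grid[OF N b])
      show ?thesis by (simp only: sum_distrib_left[symmetric] g) auto
    qed
  qed
  also have "\<dots> = of_nat N * (\<Sum>r<n. cnj (v r) * v r)"
    by (simp add: sum_distrib_left algebra_simps)
  finally show ?thesis .
qed

text \<open>The operator \<open>\<Sum>\<^sub>k E\<^sub>k a\<^sub>k a\<^sub>k\<^sup>*\<close> is positive definite: its form is \<open>\<Sum>\<^sub>k E\<^sub>k |v\<^sup>* a\<^sub>k|\<^sup>2\<close>, and by
  Parseval the grid coefficients of \<open>v\<close> vanish only for \<open>v = 0\<close>.\<close>
lemma grid_synth_eq_0_imp:
  assumes N: "N > 0" and nN: "n \<le> N" and E: "\<forall>k<N. 0 < E k"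
    and v: "\<forall>r<n. grid_synth n N E v r = 0"
  shows "\<forall>r<n. v r = 0"
proof -
  have "(\<Sum>k<N. of_real (E k) * (grid_coeff n N v k * cnj (grid_coeff n N v k))) = 0"
    unfolding inner_grid_synth[symmetric] using v by simp
  then have "(\<Sum>k<N. E k * (cmod (grid_coeff n N v k))\<^sup>2) = 0"
    by (metis (no_types, lifting) Re_complex_of_real complex_norm_square of_real_mult of_real_sum
        sum.cong zero_complex.simps(1))
  then have "\<forall>k\<in>{..<N}. E k * (cmod (grid_coeff n N v k))\<^sup>2 = 0"
    using E by (subst sum_nonneg_eq_0_iff[symmetric]) (auto intro: sum_nonneg)
  then have "grid_coeff n N v k = 0" if "k < N" for k
    using E that
      by (metis lessThan_iff mult_eq_0_iff order_less_irrefl power_eq_0_iff zero_less_norm_iff)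
  then have "of_nat N * (\<Sum>r<n. cnj (v r) * v r) = 0"
    unfolding grid_parseval[OF N nN, symmetric] by simp
  then have "(\<Sum>r<n. cnj (v r) * v r) = 0" using N by simp
  then have "(\<Sum>r<n. (cmod (v r))\<^sup>2) = 0"
    unfolding sum_cnj_mult_self of_real_eq_0_iff .
  then have "\<forall>r\<in>{..<n}. (cmod (v r))\<^sup>2 = 0"
    by (subst sum_nonneg_eq_0_iff[symmetric]) auto
  then show ?thesis by simp
qed

lemma grid_synth_surj:
  assumes N: "N > 0" and nN: "n \<le> N" and E: "\<forall>k<N. 0 < E k"
  shows "\<exists>w. \<forall>r<n. grid_synth n N E w r = z r"
proof -
  define G where "G = (\<lambda>r r'. \<Sum>k<N. of_real (E k) * e2pi (real k * real r / real N)
      * e2pi (- (real k * real r' / real N)))"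
  have mapG: "(\<Sum>r'<n. G r r' * w r') = grid_synth n N E w r" for w r
    unfolding G_def grid_synth_def cnj_grid_coeff sum_distrib_right sum_distrib_left
    by (subst sum.swap) (simp add: algebra_simps)
  have "\<forall>i<n. v i = 0" if "\<forall>i<n. (\<Sum>k<n. G i k * v k) = 0" for v
    using that grid_synth_eq_0_imp[OF N nN E, of v] by (simp add: mapG)
  then obtain w where "\<forall>i<n. (\<Sum>k<n. G i k * w k) = z i" using square_system_solvable by blast
  then show ?thesis using mapG by auto
qed

lemma atomic_norm_grid_synth_le:
  assumes N: "N > 0" and E: "\<forall>k<N. 0 \<le> E k" and z: "\<forall>r<n. z r = grid_synth n N E w r"
  shows "atomic_norm n z \<le> (\<Sum>k<N. E k) / 2 + (\<Sum>k<N. E k * (cmod (grid_coeff n N w k))\<^sup>2) / 2"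
proof -
  have "atomic_norm n z \<le> (\<Sum>k<N. cmod (of_real (E k) * cnj (grid_coeff n N w k)))"
  proof (rule atomic_norm_le)
    show "\<forall>k<N. real k / real N \<in> {0..1}" by auto
    show "\<forall>t<n. z t = (\<Sum>k<N. complex_of_real (E k) * cnj (grid_coeff n N w k) * e2pi (real k / real N * real t))"
      using z unfolding grid_synth_def by simp
  qed
  also have "\<dots> \<le> (\<Sum>k<N. (E k + E k * (cmod (grid_coeff n N w k))\<^sup>2) / 2)"
  proof (rule sum_mono)
    fix k assume "k \<in> {..<N}"
    hence Ek: "E k \<ge> 0" using E by auto
    have "cmod (grid_coeff n N w k) \<le> (1 + (cmod (grid_coeff n N w k))\<^sup>2) / 2"
      using sum_squares_bound[of 1 "cmod (grid_coeff n N w k)"] by (simp add: power2_eq_square)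
    hence "E k * cmod (grid_coeff n N w k) \<le> E k * ((1 + (cmod (grid_coeff n N w k))\<^sup>2) / 2)"
      using Ek by (rule mult_left_mono)
    thus "cmod (of_real (E k) * cnj (grid_coeff n N w k))
        \<le> (E k + E k * (cmod (grid_coeff n N w k))\<^sup>2) / 2"
      using Ek by (simp add: norm_mult algebra_simps)
  qed
  also have "\<dots> = (\<Sum>k<N. E k) / 2 + (\<Sum>k<N. E k * (cmod (grid_coeff n N w k))\<^sup>2) / 2"
    by (simp add: sum.distrib sum_divide_distrib[symmetric] add_divide_distrib)
  finally show ?thesis .
qed

subsection \<open>The linear matrix inequality\<close>

lemma sum_blocks:
  fixes m n :: nat
  shows "(\<Sum>i<m*n. f i) = (\<Sum>b<m. \<Sum>s<n. (f (b*n+s) :: complex))"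
proof (induction m)
  case 0 thus ?case by simp
next
  case (Suc m)
  have "(\<Sum>i\<in>{0..<m*n}. f i) + (\<Sum>i\<in>{m*n..<m*n+n}. f i) = (\<Sum>i\<in>{0..<m*n+n}. f i)"
    by (rule sum.atLeastLessThan_concat) auto
  hence "(\<Sum>i<Suc m * n. f i) = (\<Sum>i\<in>{0..<m*n}. f i) + (\<Sum>i\<in>{m*n..<m*n+n}. f i)"
    by (simp add: atLeast0LessThan add.commute)
  also have "(\<Sum>i\<in>{m*n..<m*n+n}. f i) = (\<Sum>s\<in>{0..<n}. f (m*n+s))"
    using sum.shift_bounds_nat_ivl[of f 0 "m*n" n] by (simp add: add.commute)
  finally show ?case using Suc by (simp add: atLeast0LessThan)
qed

lemma block_index_less: "b < Suc J \<Longrightarrow> s < n \<Longrightarrow> b * n + s < (J + 1) * n"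
proof -
  assume "b < Suc J" "s < n"
  then have "b * n + s < Suc b * n" by simp
  also have "\<dots> \<le> (J + 1) * n" using \<open>b < Suc J\<close> by (intro mult_right_mono) auto
  finally show ?thesis .
qed

lemma qform_lmi_matrix:
  fixes u :: "nat \<Rightarrow> nat \<Rightarrow> complex" and z :: "nat \<Rightarrow> nat \<Rightarrow> complex" and n J :: nat
  assumes n: "n \<ge> 1"
  defines "N0 \<equiv> (J + 1) * n"
  shows "qform (Suc N0) (lmi_matrix n J u t z) v =
     (\<Sum>b<Suc J. qform n (toep (u b)) (\<lambda>s. v (b*n+s)))
   + (\<Sum>b<Suc J. \<Sum>s<n. cnj (v (b*n+s)) * z b s * v N0)
   + (\<Sum>b<Suc J. \<Sum>s<n. cnj (v N0) * cnj (z b s) * v (b*n+s))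
   + cnj (v N0) * complex_of_real t * v N0"
proof -
  have dm: "(b*n+s) div n = b" "(b*n+s) mod n = s" if "s < n" for b s
    using that n by auto
  have lt: "b*n+s < n + J * n" if "b < Suc J" "s < n" for b s
    using block_index_less[OF that] by simp
  let ?M = "lmi_matrix n J u t z"
  have A: "qform N0 ?M v = (\<Sum>b<Suc J. qform n (toep (u b)) (\<lambda>s. v (b*n+s)))"
  proof -
    have "qform N0 ?M v = (\<Sum>b<Suc J. \<Sum>s<n. \<Sum>b'<Suc J. \<Sum>s'<n.
           cnj (v (b*n+s)) * ?M (b*n+s) (b'*n+s') * v (b'*n+s'))"
      unfolding qform_def N0_def using sum_blocks[of _ "Suc J" n] by simp
    also have "\<dots> = (\<Sum>b<Suc J. \<Sum>s<n. \<Sum>b'<Suc J. if b' = b then (\<Sum>s'<n.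
           cnj (v (b*n+s)) * toep (u b) s s' * v (b*n+s')) else 0)"
    proof (intro sum.cong refl)
      fix b s b' assume b: "b \<in> {..<Suc J}" "s \<in> {..<n}" "b' \<in> {..<Suc J}"
      show "(\<Sum>s'<n. cnj (v (b*n+s)) * ?M (b*n+s) (b'*n+s') * v (b'*n+s')) =
         (if b' = b then (\<Sum>s'<n. cnj (v (b*n+s)) * toep (u b) s s' * v (b*n+s')) else 0)"
        using b by (auto intro!: sum.cong simp: lmi_matrix_def Let_def dm lt)
    qed
    also have "\<dots> = (\<Sum>b<Suc J. qform n (toep (u b)) (\<lambda>s. v (b*n+s)))"
      unfolding qform_def by simp
    finally show ?thesis .
  qed
  have B: "(\<Sum>k<N0. cnj (v N0) * ?M N0 k * v k)
      = (\<Sum>b<Suc J. \<Sum>s<n. cnj (v N0) * cnj (z b s) * v (b*n+s))"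
  proof -
    have "(\<Sum>k<N0. cnj (v N0) * ?M N0 k * v k)
        = (\<Sum>b<Suc J. \<Sum>s<n. cnj (v N0) * ?M N0 (b*n+s) * v (b*n+s))"
      using sum_blocks[of "\<lambda>k. cnj (v N0) * ?M N0 k * v k" "Suc J" n] by (simp add: N0_def)
    also have "\<dots> = (\<Sum>b<Suc J. \<Sum>s<n. cnj (v N0) * cnj (z b s) * v (b*n+s))"
      by (intro sum.cong refl) (auto simp: lmi_matrix_def Let_def dm lt N0_def)
    finally show ?thesis .
  qed
  have C: "(\<Sum>i<N0. cnj (v i) * ?M i N0 * v N0) = (\<Sum>b<Suc J. \<Sum>s<n. cnj (v (b*n+s)) * z b s * v N0)"
  proof -
    have "(\<Sum>i<N0. cnj (v i) * ?M i N0 * v N0)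
        = (\<Sum>b<Suc J. \<Sum>s<n. cnj (v (b*n+s)) * ?M (b*n+s) N0 * v N0)"
      using sum_blocks[of "\<lambda>i. cnj (v i) * ?M i N0 * v N0" "Suc J" n] by (simp add: N0_def)
    also have "\<dots> = (\<Sum>b<Suc J. \<Sum>s<n. cnj (v (b*n+s)) * z b s * v N0)"
      by (intro sum.cong refl) (auto simp: lmi_matrix_def Let_def dm lt N0_def)
    finally show ?thesis .
  qed
  have D: "?M N0 N0 = complex_of_real t" unfolding N0_def by (simp add: lmi_matrix_def Let_def)
  show ?thesis unfolding qform_Suc_last A B C D by simp
qed

definition stack_vec :: "nat \<Rightarrow> nat \<Rightarrow> (nat \<Rightarrow> nat \<Rightarrow> complex) \<Rightarrow> complex \<Rightarrow> nat \<Rightarrow> complex" where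
  "stack_vec n J W c = (\<lambda>i. if i < (J+1)*n then W (i div n) (i mod n) else c)"

lemma stack_vec_block:
  assumes "b < Suc J" "s < n"
  shows "stack_vec n J W c (b*n+s) = W b s"
  using block_index_less[OF assms] assms unfolding stack_vec_def by simp

lemma stack_vec_last: "stack_vec n J W c ((J+1)*n) = c" "stack_vec n J W c (n + J*n) = c"
  unfolding stack_vec_def by simp_all

lemma qform_lmi_stack:
  fixes u z :: "nat \<Rightarrow> nat \<Rightarrow> complex" and n J :: nat
  assumes n: "n \<ge> 1"
  shows "qform ((J+1)*n+1) (lmi_matrix n J u t z) (stack_vec n J W c) =
     (\<Sum>b<Suc J. qform n (toep (u b)) (W b))
   + (\<Sum>b<Suc J. \<Sum>s<n. cnj (W b s) * z b s * c)
   + (\<Sum>b<Suc J. \<Sum>s<n. cnj c * cnj (z b s) * W b s)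
   + cnj c * complex_of_real t * c"
proof -
  have e1: "(\<Sum>b<Suc J. qform n (toep (u b)) (\<lambda>s. stack_vec n J W c (b*n+s)))
      = (\<Sum>b<Suc J. qform n (toep (u b)) (W b))"
    by (intro sum.cong refl qform_cong) (auto simp: stack_vec_block)
  have e2: "(\<Sum>b<Suc J. \<Sum>s<n. cnj (stack_vec n J W c (b*n+s)) * z b s * c)
      = (\<Sum>b<Suc J. \<Sum>s<n. cnj (W b s) * z b s * c)"
    by (intro sum.cong refl) (auto simp: stack_vec_block stack_vec_last)
  have e3: "(\<Sum>b<Suc J. \<Sum>s<n. cnj c * cnj (z b s) * stack_vec n J W c (b*n+s))
      = (\<Sum>b<Suc J. \<Sum>s<n. cnj c * cnj (z b s) * W b s)"
    by (intro sum.cong refl) (auto simp: stack_vec_block stack_vec_last)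
  show ?thesis
    using qform_lmi_matrix[OF n, of J u t z "stack_vec n J W c"]
      unfolding stack_vec_last e1 e2 e3 by simp
qed

lemma lmi_psd_blocks:
  fixes u z :: "nat \<Rightarrow> nat \<Rightarrow> complex" and n J :: nat
  assumes n: "n \<ge> 1" and P: "psd ((J + 1) * n + 1) (lmi_matrix n J u t z)"
  shows "t \<ge> 0" and "\<And>b. b < Suc J \<Longrightarrow> re_psd n (toep (u b))"
    and "\<And>b. b < Suc J \<Longrightarrow> Im (u b 0) = 0"
proof -
  have P': "\<And>v. qform ((J + 1) * n + 1) (lmi_matrix n J u t z) v \<in> \<real> \<and> 0
      \<le> Re (qform ((J + 1) * n + 1) (lmi_matrix n J u t z) v)"
    using P unfolding psd_iff_qform by blast
  have blk: "qform ((J+1)*n+1) (lmi_matrix n J u t z) (stack_vec n J (\<lambda>b' s. if b' = b then w s else 0) 0)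
      = qform n (toep (u b)) w"
    if b: "b < Suc J" for b w
  proof -
    have "(\<Sum>b'<Suc J. qform n (toep (u b')) (\<lambda>s. if b' = b then w s else 0))
        = (\<Sum>b'<Suc J. if b' = b then qform n (toep (u b)) w else 0)"
      by (intro sum.cong refl) (auto simp: qform_zero_vec)
    also have "\<dots> = qform n (toep (u b)) w" using b by simp
    finally show ?thesis unfolding qform_lmi_stack[OF n] by simp
  qed
  have "qform ((J+1)*n+1) (lmi_matrix n J u t z) (stack_vec n J (\<lambda>_ _. 0) 1) = complex_of_real t"
    unfolding qform_lmi_stack[OF n] by (simp add: qform_zero_vec)
  thus "t \<ge> 0" using P'[of "stack_vec n J (\<lambda>_ _. 0) 1"] by simp
  show "re_psd n (toep (u b))" if b: "b < Suc J" for b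
    unfolding re_psd_def using P' blk[OF b] by metis
  show "Im (u b 0) = 0" if b: "b < Suc J" for b
  proof -
    have "qform n (toep (u b)) (\<lambda>i. if i = 0 then 1 else 0) = u b 0"
      using qform_unit0[OF n] by (simp add: toep_def)
    thus ?thesis
      using P'[of "stack_vec n J (\<lambda>b' s. if b' = b then (if s = 0 then 1 else 0) else 0) 0"] blk[OF b]
      by (metis complex_is_Real_iff)
  qed
qed

lemma mtrace_toep: "mtrace n (toep w) = of_nat n * w 0"
  unfolding mtrace_def toep_def by simp

lemma sum_head_atLeast1: "f 0 + (\<Sum>j=1..J. f j) = (\<Sum>b<Suc J. (f b :: 'a :: comm_monoid_add))"
  by (simp only: sum.lessThan_Suc_shift One_nat_def sum.atLeast1_atMost_eq)

lemma lmi_objective_eq: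
  assumes n: "n \<ge> 1"
  shows "Re (mtrace n (toep (u 0)) + (\<Sum>j=1..J. mtrace n (toep (u j)))) / (2 * real n) + t / 2
       = (\<Sum>b<Suc J. Re (u b 0)) / 2 + t / 2"
proof -
  have "mtrace n (toep (u 0)) + (\<Sum>j=1..J. mtrace n (toep (u j))) = (\<Sum>b<Suc J. of_nat n * u b 0)"
    unfolding mtrace_toep by (rule sum_head_atLeast1)
  hence "Re (mtrace n (toep (u 0)) + (\<Sum>j=1..J. mtrace n (toep (u j))))
      = real n * (\<Sum>b<Suc J. Re (u b 0))"
    by (simp add: sum_distrib_left distrib_left)
  thus ?thesis using n by simp
qed

lemma toep_of_atoms:
  "toep (\<lambda>d. \<Sum>k<m. complex_of_real (\<rho> k) * e2pi (f k * real d)) s s'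
     = (\<Sum>k<m. complex_of_real (\<rho> k) * (e2pi (f k * real s) * cnj (e2pi (f k * real s'))))"
proof (cases "s' \<le> s")
  case True
  have "e2pi (f k * real (s - s')) = e2pi (f k * real s) * cnj (e2pi (f k * real s'))" for k
    unfolding cnj_e2pi e2pi_add[symmetric] using True by (simp add: algebra_simps)
  thus ?thesis using True unfolding toep_def by simp
next
  case False
  have "cnj (e2pi (f k * real (s' - s))) = e2pi (f k * real s) * cnj (e2pi (f k * real s'))" for k
    unfolding cnj_e2pi e2pi_add[symmetric] using False by (simp add: algebra_simps)
  thus ?thesis using False unfolding toep_def by simp
qed

lemma qform_toep_of_atoms:
  "qform n (toep (\<lambda>d. \<Sum>k<m. complex_of_real (\<rho> k) * e2pi (f k * real d))) w
    = (\<Sum>k<m. complex_of_real (\<rho> k) * ((\<Sum>s<n. cnj (w s) * e2pi (f k * real s))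
        * cnj (\<Sum>s<n. cnj (w s) * e2pi (f k * real s))))"
proof -
  have "qform n (toep (\<lambda>d. \<Sum>k<m. complex_of_real (\<rho> k) * e2pi (f k * real d))) w
      = (\<Sum>s<n. \<Sum>s'<n. \<Sum>k<m. complex_of_real (\<rho> k)
          * ((cnj (w s) * e2pi (f k * real s)) * (w s' * cnj (e2pi (f k * real s')))))"
    unfolding qform_def toep_of_atoms
      by (simp add: sum_distrib_left sum_distrib_right algebra_simps)
  also have "\<dots> = (\<Sum>k<m. \<Sum>s<n. \<Sum>s'<n. complex_of_real (\<rho> k)
      * ((cnj (w s) * e2pi (f k * real s)) * (w s' * cnj (e2pi (f k * real s')))))"
    by (rule sum_swap3[symmetric])
  also have "\<dots> = (\<Sum>k<m. complex_of_real (\<rho> k) * ((\<Sum>s<n. cnj (w s) * e2pi (f k * real s))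
        * cnj (\<Sum>s<n. cnj (w s) * e2pi (f k * real s))))"
    by (unfold cnj_sum complex_cnj_mult complex_cnj_cnj, unfold sum_product, unfold sum_distrib_left, rule refl)
  finally show ?thesis .
qed

lemma qform_lmi_of_atoms:
  fixes Z :: "nat \<Rightarrow> nat \<Rightarrow> complex" and m :: "nat \<Rightarrow> nat" and \<rho> f \<phi> :: "nat \<Rightarrow> nat \<Rightarrow> real"
    and n J :: nat
  assumes n: "n \<ge> 1"
    and dec: "\<forall>b<Suc J. \<forall>t<n. Z b t = (\<Sum>k<m b. complex_of_real (\<rho> b k) * atom (f b k) (\<phi> b k) t)"
  defines "u \<equiv> (\<lambda>b d. \<Sum>k<m b. complex_of_real (\<rho> b k) * e2pi (f b k * real d))"
    and "tt \<equiv> (\<Sum>b<Suc J. \<Sum>k<m b. \<rho> b k)"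
  shows "qform ((J+1)*n+1) (lmi_matrix n J u tt Z) v = complex_of_real
      (\<Sum>b<Suc J. \<Sum>k<m b. \<rho> b k
        * (cmod (cis (\<phi> b k) * (\<Sum>s<n. cnj (v (b*n+s)) * e2pi (f b k * real s)) + cnj (v ((J+1)*n))))\<^sup>2)"
proof -
  define N0 where "N0 = (J+1)*n"
  define A where "A = (\<lambda>b k. \<Sum>s<n. cnj (v (b*n+s)) * e2pi (f b k * real s))"
  define p where "p = (\<lambda>b k. cis (\<phi> b k) * A b k + cnj (v N0))"
  have cA: "cnj (A b k) = (\<Sum>s<n. v (b*n+s) * cnj (e2pi (f b k * real s)))" for b k
    unfolding A_def cnj_sum by simp
  have Q1: "qform n (toep (u b)) (\<lambda>s. v (b*n+s))
      = (\<Sum>k<m b. complex_of_real (\<rho> b k) * (A b k * cnj (A b k)))" for b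
    unfolding u_def A_def by (rule qform_toep_of_atoms)
  have Q2: "(\<Sum>s<n. cnj (v (b*n+s)) * Z b s * v N0)
      = (\<Sum>k<m b. complex_of_real (\<rho> b k) * (cis (\<phi> b k) * A b k * v N0))"
    if b: "b < Suc J" for b
  proof -
    have "(\<Sum>s<n. cnj (v (b*n+s)) * Z b s * v N0) = (\<Sum>s<n. \<Sum>k<m b.
        complex_of_real (\<rho> b k) * (cis (\<phi> b k) * (cnj (v (b*n+s)) * e2pi (f b k * real s)) * v N0))"
      using dec b
        by (intro sum.cong refl) (simp add: atom_e2pi sum_distrib_left sum_distrib_right algebra_simps)
    also have "\<dots> = (\<Sum>k<m b. complex_of_real (\<rho> b k) * (cis (\<phi> b k) * A b k * v N0))"
      by (subst sum.swap) (simp add: A_def sum_distrib_left sum_distrib_right algebra_simps)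
    finally show ?thesis .
  qed
  have Q3: "(\<Sum>s<n. cnj (v N0) * cnj (Z b s) * v (b*n+s))
      = (\<Sum>k<m b. complex_of_real (\<rho> b k) * (cnj (cis (\<phi> b k)) * cnj (A b k) * cnj (v N0)))"
    if b: "b < Suc J" for b
  proof -
    have "(\<Sum>s<n. cnj (v N0) * cnj (Z b s) * v (b*n+s)) = (\<Sum>s<n. \<Sum>k<m b.
        complex_of_real (\<rho> b k) * (cnj (cis (\<phi> b k)) * (v (b*n+s) * cnj (e2pi (f b k * real s))) * cnj (v N0)))"
      using dec b
        by (intro sum.cong refl) (simp add: atom_e2pi sum_distrib_left sum_distrib_right algebra_simps)
    also have "\<dots> = (\<Sum>k<m b. complex_of_real (\<rho> b k) * (cnj (cis (\<phi> b k)) * cnj (A b k) * cnj (v N0)))"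
      by (subst sum.swap) (simp add: cA sum_distrib_left sum_distrib_right algebra_simps)
    finally show ?thesis .
  qed
  have Q4: "cnj (v N0) * complex_of_real tt * v N0
      = (\<Sum>b<Suc J. \<Sum>k<m b. complex_of_real (\<rho> b k) * (cnj (v N0) * v N0))"
    unfolding tt_def by (simp add: sum_distrib_left sum_distrib_right algebra_simps)
  have pp: "p b k * cnj (p b k) = A b k * cnj (A b k) + cis (\<phi> b k) * A b k * v N0
      + cnj (cis (\<phi> b k)) * cnj (A b k) * cnj (v N0) + cnj (v N0) * v N0" for b k
  proof -
    have c1: "cis (\<phi> b k) * cnj (cis (\<phi> b k)) = 1" by (simp add: cis_cnj cis_mult)
    have "p b k * cnj (p b k) = (cis (\<phi> b k) * cnj (cis (\<phi> b k))) * (A b k * cnj (A b k))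
        + cis (\<phi> b k) * A b k * v N0
      + cnj (cis (\<phi> b k)) * cnj (A b k) * cnj (v N0) + cnj (v N0) * v N0"
      unfolding p_def by (simp add: algebra_simps)
    thus ?thesis unfolding c1 by simp
  qed
  have "qform (Suc N0) (lmi_matrix n J u tt Z) v =
     (\<Sum>b<Suc J. \<Sum>k<m b. complex_of_real (\<rho> b k) * (p b k * cnj (p b k)))"
  proof -
    have S2: "(\<Sum>b<Suc J. \<Sum>s<n. cnj (v (b*n+s)) * Z b s * v N0)
        = (\<Sum>b<Suc J. \<Sum>k<m b. complex_of_real (\<rho> b k) * (cis (\<phi> b k) * A b k * v N0))"
      by (rule sum.cong[OF refl]) (simp add: Q2)
    have S3: "(\<Sum>b<Suc J. \<Sum>s<n. cnj (v N0) * cnj (Z b s) * v (b*n+s))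
        = (\<Sum>b<Suc J. \<Sum>k<m b. complex_of_real (\<rho> b k) * (cnj (cis (\<phi> b k)) * cnj (A b k) * cnj (v N0)))"
      by (rule sum.cong[OF refl]) (simp add: Q3)
    show ?thesis
      unfolding qform_lmi_matrix[OF n, of J u tt Z v, folded N0_def] Q1 Q4 pp S2 S3
      by (simp only: distrib_left sum.distrib)
  qed
  also have "\<dots> = complex_of_real (\<Sum>b<Suc J. \<Sum>k<m b. \<rho> b k * (cmod (p b k))\<^sup>2)"
    by (simp only: of_real_sum of_real_mult complex_norm_square)
  finally show "qform ((J+1)*n+1) (lmi_matrix n J u tt Z) v = complex_of_real
      (\<Sum>b<Suc J. \<Sum>k<m b. \<rho> b k
        * (cmod (cis (\<phi> b k) * (\<Sum>s<n. cnj (v (b*n+s)) * e2pi (f b k * real s)) + cnj (v ((J+1)*n))))\<^sup>2)"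
    unfolding p_def A_def N0_def by simp
qed

text \<open>The dual certificate for one block: \<open>z\<close> is written as \<open>(\<Sum>\<^sub>k E\<^sub>k a\<^sub>k a\<^sub>k\<^sup>*) w\<close> with the weights of
  \<open>toep_grid_domination\<close>; then \<open>S = w\<^sup>* z\<close> bounds both the atomic norm of \<open>z\<close> (by AM--GM) and the
  form of \<open>Toep(u)\<close> at \<open>w\<close>.\<close>
lemma atomic_norm_toep_certificate:
  assumes n: "n \<ge> 1" and re: "Im (u 0) = 0" and psd: "re_psd n (toep u)" and eps: "\<epsilon> > 0"
  shows "\<exists>w S. atomic_norm n z \<le> (Re (u 0) + \<epsilon>) / 2 + S / 2 \<and> Re (qform n (toep u) w) \<le> S
      \<and> (\<Sum>r<n. cnj (w r) * z r) = complex_of_real S"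
proof -
  obtain N E where N: "N > 0" "n \<le> N" and E: "\<forall>k<N. 0 < E k" and sumE: "(\<Sum>k<N. E k) \<le> Re (u 0) + \<epsilon>"
    and dom: "\<forall>v. Re (qform n (toep u) v) \<le> (\<Sum>k<N. E k * (cmod (grid_coeff n N v k))\<^sup>2)"
    using toep_grid_domination[OF n re psd eps] by blast
  obtain w where w: "\<forall>r<n. grid_synth n N E w r = z r" using grid_synth_surj[OF N E] by blast
  define S where "S = (\<Sum>k<N. E k * (cmod (grid_coeff n N w k))\<^sup>2)"
  have "atomic_norm n z \<le> (\<Sum>k<N. E k) / 2 + S / 2"
    unfolding S_def using w E by (intro atomic_norm_grid_synth_le[OF N(1)]) (auto simp: less_imp_le)
  then have "atomic_norm n z \<le> (Re (u 0) + \<epsilon>) / 2 + S / 2"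
    using divide_right_mono[OF sumE, of 2] by linarith
  moreover have "(\<Sum>r<n. cnj (w r) * z r) = complex_of_real S"
  proof -
    have "(\<Sum>r<n. cnj (w r) * z r) = (\<Sum>r<n. cnj (w r) * grid_synth n N E w r)" using w by simp
    also have "\<dots> = complex_of_real S"
      unfolding inner_grid_synth S_def by (simp only: of_real_sum of_real_mult complex_norm_square)
    finally show ?thesis .
  qed
  moreover have "Re (qform n (toep u) w) \<le> S" using dom unfolding S_def by blast
  ultimately show ?thesis by blast
qed

lemma ca_costs_bdd_below:
  assumes "n \<ge> 1"
  shows "bdd_below {atomic_norm n zc + (\<Sum>j=1..J. atomic_norm n (z j)) | zc z.
      \<forall>j\<in>{1..J}. \<forall>t<n. zc t + z j t = x j t}"
  by (rule bdd_belowI[of _ 0]) (auto intro!: add_nonneg_nonneg sum_nonneg atomic_norm_nonneg[OF assms])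

text \<open>Testing the LMI against \<open>[-w\<^sub>0; \<dots>; -w\<^sub>J; 1]\<close> built from the block certificates shows that the
  certificate values \<open>S\<^sub>b\<close> add up to at most \<open>t\<close>.\<close>
lemma ca_norm_le_lmi_value:
  fixes u z :: "nat \<Rightarrow> nat \<Rightarrow> complex"
  assumes n: "n \<ge> 1"
    and feas: "\<forall>j\<in>{1..J}. \<forall>s<n. z 0 s + z j s = x j s"
    and P: "psd ((J + 1) * n + 1) (lmi_matrix n J u t z)"
  shows "ca_norm n J x \<le> (\<Sum>b<Suc J. Re (u b 0)) / 2 + t / 2"
proof (rule field_le_epsilon)
  fix e :: real assume e: "e > 0"
  define \<epsilon> where "\<epsilon> = e / real (Suc J)"
  have eps: "\<epsilon> > 0" using e by (simp add: \<epsilon>_def)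
  define cert where "cert b w S \<longleftrightarrow> atomic_norm n (z b) \<le> (Re (u b 0) + \<epsilon>) / 2 + S / 2
      \<and> Re (qform n (toep (u b)) w) \<le> S \<and> (\<Sum>r<n. cnj (w r) * z b r) = complex_of_real S" for b w S
  have "\<forall>b. \<exists>w S. b < Suc J \<longrightarrow> cert b w S"
    unfolding cert_def
      using atomic_norm_toep_certificate[OF n lmi_psd_blocks(3,2)[OF n P] eps] by blast
  then obtain W SS where "\<forall>b. b < Suc J \<longrightarrow> cert b (W b) (SS b)" by metis
  then have WS: "\<And>b. b < Suc J \<Longrightarrow> atomic_norm n (z b) \<le> (Re (u b 0) + \<epsilon>) / 2 + SS b / 2"
     "\<And>b. b < Suc J \<Longrightarrow> Re (qform n (toep (u b)) (W b)) \<le> SS b"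
     "\<And>b. b < Suc J \<Longrightarrow> (\<Sum>r<n. cnj (W b r) * z b r) = complex_of_real (SS b)"
    unfolding cert_def by blast+
  have "(\<Sum>b<Suc J. \<Sum>s<n. cnj (W b s) * z b s * (-1)) = - complex_of_real (\<Sum>b<Suc J. SS b)"
    using WS(3) by (simp add: sum_negf flip: sum_distrib_right)
  moreover have "(\<Sum>b<Suc J. \<Sum>s<n. cnj (-1) * cnj (z b s) * W b s)
      = - complex_of_real (\<Sum>b<Suc J. SS b)"
  proof -
    have "(\<Sum>s<n. cnj (-1) * cnj (z b s) * W b s) = - cnj (complex_of_real (SS b))" if "b < Suc J"
      for b
      using arg_cong[OF WS(3)[OF that], of cnj] by (simp add: sum_negf mult.commute)
    then show ?thesis by (simp add: sum_negf)
  qed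
  moreover have "0 \<le> Re (qform ((J + 1) * n + 1) (lmi_matrix n J u t z) (stack_vec n J W (-1)))"
    using P unfolding psd_iff_qform by blast
  ultimately have "0 \<le> (\<Sum>b<Suc J. Re (qform n (toep (u b)) (W b))) - 2 * (\<Sum>b<Suc J. SS b) + t"
    unfolding qform_lmi_stack[OF n] by simp
  moreover have "(\<Sum>b<Suc J. Re (qform n (toep (u b)) (W b))) \<le> (\<Sum>b<Suc J. SS b)"
    using WS(2) by (intro sum_mono) auto
  ultimately have SS_le: "(\<Sum>b<Suc J. SS b) \<le> t" by simp
  have "ca_norm n J x \<le> (\<Sum>b<Suc J. atomic_norm n (z b))"
    unfolding ca_norm_def sum_head_atLeast1[symmetric] using feas
    by (intro cInf_lower[OF _ ca_costs_bdd_below[OF n]]) blast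
  also have "\<dots> \<le> (\<Sum>b<Suc J. (Re (u b 0) + \<epsilon>) / 2 + SS b / 2)"
    using WS(1) by (intro sum_mono) auto
  also have "\<dots> = (\<Sum>b<Suc J. Re (u b 0)) / 2 + real (Suc J) * \<epsilon> / 2 + (\<Sum>b<Suc J. SS b) / 2"
    by (simp add: sum.distrib sum_divide_distrib[symmetric] add_divide_distrib)
  also have "real (Suc J) * \<epsilon> = e" by (simp add: \<epsilon>_def)
  finally show "ca_norm n J x \<le> (\<Sum>b<Suc J. Re (u b 0)) / 2 + t / 2 + e" using SS_le e by linarith
qed

lemma lmi_value_le_atomic_norms:
  fixes Z :: "nat \<Rightarrow> nat \<Rightarrow> complex"
  assumes n: "n \<ge> 1" and e: "e > 0"
  shows "\<exists>u t. psd ((J+1)*n+1) (lmi_matrix n J u t Z) \<and>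
     (\<Sum>b<Suc J. Re (u b 0)) / 2 + t / 2 \<le> (\<Sum>b<Suc J. atomic_norm n (Z b)) + e"
proof -
  define \<epsilon> where "\<epsilon> = e / real (Suc J)"
  have eps: "\<epsilon> > 0" using e by (simp add: \<epsilon>_def)
  define approx where "approx b m \<rho> f \<phi> \<longleftrightarrow> (\<forall>k<m. 0 \<le> \<rho> k \<and> f k \<in> {0..1}) \<and>
      (\<forall>t<n. Z b t = (\<Sum>k<m. complex_of_real (\<rho> k) * atom (f k) (\<phi> k) t)) \<and>
      (\<Sum>k<m. \<rho> k) < atomic_norm n (Z b) + \<epsilon>"
    for b and m :: nat and \<rho> f \<phi> :: "nat \<Rightarrow> real"
  have "\<forall>b. \<exists>m \<rho> f \<phi>. approx b m \<rho> f \<phi>"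
    unfolding approx_def using atomic_norm_approx[OF n eps] by blast
  then obtain m \<rho> f \<phi> where "\<forall>b. approx b (m b) (\<rho> b) (f b) (\<phi> b)" by metis
  then have nonneg: "\<And>b k. k < m b \<Longrightarrow> 0 \<le> \<rho> b k"
    and dec: "\<forall>b<Suc J. \<forall>t<n. Z b t = (\<Sum>k<m b. complex_of_real (\<rho> b k) * atom (f b k) (\<phi> b k) t)"
    and cost: "\<And>b. (\<Sum>k<m b. \<rho> b k) < atomic_norm n (Z b) + \<epsilon>"
    unfolding approx_def by blast+
  define u where "u = (\<lambda>b d. \<Sum>k<m b. complex_of_real (\<rho> b k) * e2pi (f b k * real d))"
  define t where "t = (\<Sum>b<Suc J. \<Sum>k<m b. \<rho> b k)"
  have psd: "psd ((J+1)*n+1) (lmi_matrix n J u t Z)"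
    unfolding psd_iff_qform u_def t_def qform_lmi_of_atoms[OF n dec] Re_complex_of_real
    by (intro allI conjI Reals_of_real sum_nonneg mult_nonneg_nonneg zero_le_power2) (simp add: nonneg)
  have "(\<Sum>b<Suc J. Re (u b 0)) / 2 + t / 2 = t"
    unfolding u_def t_def by simp
  also have "\<dots> \<le> (\<Sum>b<Suc J. atomic_norm n (Z b) + \<epsilon>)"
    unfolding t_def using cost by (intro sum_mono) (simp add: less_imp_le)
  also have "\<dots> = (\<Sum>b<Suc J. atomic_norm n (Z b)) + e"
    by (simp add: \<epsilon>_def sum.distrib)
  finally show ?thesis using psd by blast
qed

lemma lmi_value_le_ca_cost:
  assumes n: "n \<ge> 1" and e: "e > 0" and feas: "\<forall>j\<in>{1..J}. \<forall>t<n. zc t + zz j t = x j t"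
  shows "\<exists>u t z. (\<forall>j\<in>{1..J}. \<forall>s<n. z 0 s + z j s = x j s) \<and> psd ((J + 1) * n + 1) (lmi_matrix n J u t z)
    \<and> (\<Sum>b<Suc J. Re (u b 0)) / 2 + t / 2 \<le> atomic_norm n zc + (\<Sum>j=1..J. atomic_norm n (zz j)) + e"
proof -
  define Z where "Z = (\<lambda>b. if b = 0 then zc else zz b)"
  have "atomic_norm n zc + (\<Sum>j=1..J. atomic_norm n (zz j)) = (\<Sum>b<Suc J. atomic_norm n (Z b))"
    unfolding sum_head_atLeast1[symmetric] Z_def by simp
  moreover have "\<forall>j\<in>{1..J}. \<forall>s<n. Z 0 s + Z j s = x j s" using feas by (simp add: Z_def)
  moreover obtain u t where "psd ((J + 1) * n + 1) (lmi_matrix n J u t Z)"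
    and "(\<Sum>b<Suc J. Re (u b 0)) / 2 + t / 2 \<le> (\<Sum>b<Suc J. atomic_norm n (Z b)) + e"
    using lmi_value_le_atomic_norms[OF n e, of J Z] by auto
  ultimately show ?thesis by (intro exI[of _ u] exI[of _ t] exI[of _ Z]) simp
qed

lemma cInf_eq_if_approx:
  fixes A B :: "real set"
  assumes A: "A \<noteq> {}" and lower: "\<And>b. b \<in> B \<Longrightarrow> Inf A \<le> b"
    and approx: "\<And>a e. a \<in> A \<Longrightarrow> 0 < e \<Longrightarrow> \<exists>b\<in>B. b \<le> a + e"
  shows "Inf A = Inf B"
proof (rule antisym)
  have B: "B \<noteq> {}" using A approx[of _ 1] by fastforce
  then show "Inf A \<le> Inf B" using lower by (rule cInf_greatest)
  have bdd: "bdd_below B" using lower by (rule bdd_belowI)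
  show "Inf B \<le> Inf A"
  proof (rule cInf_greatest[OF A])
    fix a assume a: "a \<in> A"
    show "Inf B \<le> a"
    proof (rule field_le_epsilon)
      fix e :: real assume "0 < e"
      then obtain b where "b \<in> B" "b \<le> a + e" using approx[OF a] by blast
      then show "Inf B \<le> a + e" using cInf_lower[OF _ bdd] by (meson order_trans)
    qed
  qed
qed

theorem theorem1:
  fixes n J :: nat and x :: "nat \<Rightarrow> nat \<Rightarrow> complex"
  assumes "n \<ge> 1" and "J \<ge> 1"
  shows "ca_norm n J x =
    Inf {Re (mtrace n (toep (u 0)) + (\<Sum>j=1..J. mtrace n (toep (u j)))) / (2 * real n) + t / 2
          | u t z. (\<forall>j\<in>{1..J}. \<forall>s<n. z 0 s + z j s = x j s) \<and>
                   psd ((J + 1) * n + 1) (lmi_matrix n J u t z)}"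
proof -
  let ?A = "{atomic_norm n zc + (\<Sum>j=1..J. atomic_norm n (z j)) | zc z.
      \<forall>j\<in>{1..J}. \<forall>t<n. zc t + z j t = x j t}"
  let ?B = "{(\<Sum>b<Suc J. Re (u b 0)) / 2 + t / 2 | u t z.
      (\<forall>j\<in>{1..J}. \<forall>s<n. z 0 s + z j s = x j s) \<and> psd ((J + 1) * n + 1) (lmi_matrix n J u t z)}"
  have "Inf ?A = Inf ?B"
  proof (rule cInf_eq_if_approx)
    have "atomic_norm n (\<lambda>_. 0) + (\<Sum>j=1..J. atomic_norm n (x j)) \<in> ?A" by force
    then show "?A \<noteq> {}" by blast
    show "Inf ?A \<le> b" if "b \<in> ?B" for b
      using that ca_norm_le_lmi_value[OF \<open>n \<ge> 1\<close>] unfolding ca_norm_def by blast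
    show "\<exists>b\<in>?B. b \<le> a + e" if "a \<in> ?A" and "0 < e" for a e
    proof -
      obtain zc zz where a: "a = atomic_norm n zc + (\<Sum>j=1..J. atomic_norm n (zz j))"
        and feas: "\<forall>j\<in>{1..J}. \<forall>t<n. zc t + zz j t = x j t"
        using \<open>a \<in> ?A\<close> by blast
      obtain u t z where "\<forall>j\<in>{1..J}. \<forall>s<n. z 0 s + z j s = x j s" "psd ((J + 1) * n + 1) (lmi_matrix n J u t z)"
        and "(\<Sum>b<Suc J. Re (u b 0)) / 2 + t / 2 \<le> a + e"
        using lmi_value_le_ca_cost[OF \<open>n \<ge> 1\<close> \<open>0 < e\<close> feas] unfolding a by blast
      then show ?thesis by blast
    qed
  qed
  then show ?thesis unfolding ca_norm_def lmi_objective_eq[OF \<open>n \<ge> 1\<close>] .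
qed

end
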